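(* Let $a_{ij}\ge 0$ for $1\le i\ne j\le N$ with $a_{ij}=a_{ji}$, and let $L$ be the matrix with $L_{ii}=\sum_{j\ne i}a_{ij}$, $L_{ij}=-a_{ij}$ ($i\ne j$); assume $L$ is symmetric and connected (irreducible), and let $\lambda_2$ be its second smallest eigenvalue. Let $\mathbf S(t)$ be the stochastic consensus model: independent Poisson processes $N^{ij}$ of rate $a_{ij}$, and $\mathrm dS_i=\sum_{j\ne i}(S_j-S_i)\,\mathrm dN^{ij}$. With $V(\mathbf S)=\frac1N\sum_{i=1}^N|S_i-\bar S|^2$, $\bar S=\frac1N\sum_iS_i$, we have for all $t\ge0$ $$\mathbb E[V(\mathbf S(t))]\le e^{-\lambda_2 t/N}\,\mathbb E[V(\mathbf S(0))].$$
   Context: Connected (irreducible) means: for every $i\ne j$ there is a sequence $i=q_1,\dots,q_k=j$ with $a_{q_lq_{l+1}}>0$ for all $l$. *)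

theory Defs
  imports "HOL-Probability.Probability" "HOL-Computational_Algebra.Polynomial"
begin

text \<open>Agents are indexed by a finite type 'n, so N = CARD('n).
  Only the off-diagonal weights a i j (i different from j) are used.\<close>

definition laplacian :: "('n::finite \<Rightarrow> 'n \<Rightarrow> real) \<Rightarrow> real^'n^'n" where
  "laplacian a = (\<chi> i j. if i = j then (\<Sum>k\<in>UNIV - {i}. a i k) else - a i j)"

definition weights_connected :: "('n::finite \<Rightarrow> 'n \<Rightarrow> real) \<Rightarrow> bool" where
  "weights_connected a \<longleftrightarrow>
     (\<forall>i j. i \<noteq> j \<longrightarrow> (\<exists>qs. qs \<noteq> [] \<and> hd qs = i \<and> last qs = j \<and>
        (\<forall>l. Suc l < length qs \<longrightarrow> qs ! l \<noteq> qs ! Suc l \<and> a (qs ! l) (qs ! Suc l) > 0)))"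

definition charpoly :: "real^'n^'n \<Rightarrow> real poly" where
  "charpoly A = det (\<chi> i j. (if i = j then [:0, 1:] else 0) - [:A $ i $ j:])"

definition eig_count :: "real^'n^'n \<Rightarrow> real \<Rightarrow> nat" where
  "eig_count A x = (\<Sum>\<mu>\<in>{\<mu>. poly (charpoly A) \<mu> = 0 \<and> \<mu> \<le> x}. order \<mu> (charpoly A))"

text \<open>k-th smallest eigenvalue (with multiplicity), k = 1, 2, ...\<close>
definition kth_eigenvalue :: "real^'n^'n \<Rightarrow> nat \<Rightarrow> real" where
  "kth_eigenvalue A k = (LEAST x. k \<le> eig_count A x)"

definition left_lim :: "(real \<Rightarrow> real) \<Rightarrow> real \<Rightarrow> real" where
  "left_lim f s = Lim (at_left s) f"

definition jump_times :: "(real \<Rightarrow> nat) \<Rightarrow> real \<Rightarrow> real set" where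
  "jump_times n t = {s \<in> {0<..t}. real (n s) \<noteq> left_lim (\<lambda>u. real (n u)) s}"

text \<open>Independence of the processes and of their increments is expressed by
  mutual independence of all increments over any finite time grid 0 = t_0 <= ... <= t_k
  (together with S 0).\<close>
definition off_diag :: "('n \<times> 'n) set" where
  "off_diag = {(i, j). i \<noteq> j}"

definition poisson_clocks ::
  "'a measure \<Rightarrow> ('n::finite \<Rightarrow> 'n \<Rightarrow> real) \<Rightarrow> ('n \<times> 'n \<Rightarrow> real \<Rightarrow> 'a \<Rightarrow> nat)
     \<Rightarrow> (real \<Rightarrow> 'a \<Rightarrow> 'n \<Rightarrow> real) \<Rightarrow> bool" where
  "poisson_clocks M a Np S \<longleftrightarrow>
     (\<forall>p\<in>off_diag. \<forall>t\<ge>0. Np p t \<in> measurable M (count_space UNIV)) \<and>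
     (\<forall>p\<in>off_diag. \<forall>\<omega>\<in>space M. Np p 0 \<omega> = 0 \<and>
        mono_on {0..} (\<lambda>t. Np p t \<omega>) \<and>
        (\<forall>t\<ge>0. continuous (at_right t) (\<lambda>s. real (Np p s \<omega>)))) \<and>
     (\<forall>p\<in>off_diag. \<forall>s t k. 0 \<le> s \<longrightarrow> s \<le> t \<longrightarrow>
        measure M {\<omega>\<in>space M. Np p t \<omega> - Np p s \<omega> = k}
          = (case p of (i, j) \<Rightarrow> (a i j * (t - s)) ^ k / fact k * exp (- (a i j * (t - s))))) \<and>
     (\<forall>(tt :: nat \<Rightarrow> real) k. tt 0 = 0 \<and> (\<forall>m<k. tt m \<le> tt (Suc m)) \<longrightarrow>
        prob_space.indep_sets M
          (\<lambda>x. case x of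
               None \<Rightarrow> {(\<lambda>\<omega>. S 0 \<omega>) -` A \<inter> space M | A. A \<in> sets (Pi\<^sub>M UNIV (\<lambda>_. borel))}
             | Some (p, m) \<Rightarrow> {(\<lambda>\<omega>. Np p (tt (Suc m)) \<omega> - Np p (tt m) \<omega>) -` A \<inter> space M
                                  | A. A \<in> sets (count_space UNIV)})
          (insert None (Some ` (off_diag \<times> {..<k}))))"

text \<open>Pathwise (integral) form of dS_i = sum_{j ~= i} (S_j - S_i) dN^{ij}: the
  stochastic integral against a counting process is the sum over its jump times.\<close>
definition consensus_solution ::
  "'a measure \<Rightarrow> ('n::finite \<times> 'n \<Rightarrow> real \<Rightarrow> 'a \<Rightarrow> nat) \<Rightarrow> (real \<Rightarrow> 'a \<Rightarrow> 'n \<Rightarrow> real) \<Rightarrow> bool" where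
  "consensus_solution M Np S \<longleftrightarrow>
     (\<forall>t\<ge>0. (\<lambda>\<omega>. S t \<omega>) \<in> measurable M (Pi\<^sub>M UNIV (\<lambda>_. borel))) \<and>
     (AE \<omega> in M. \<forall>t\<ge>0. \<forall>i. S t \<omega> i = S 0 \<omega> i +
        (\<Sum>j\<in>UNIV - {i}. \<Sum>s\<in>jump_times (\<lambda>u. Np (i, j) u \<omega>) t.
           (left_lim (\<lambda>u. S u \<omega> j) s - left_lim (\<lambda>u. S u \<omega> i) s) *
           (real (Np (i, j) s \<omega>) - left_lim (\<lambda>u. real (Np (i, j) u \<omega>)) s)))"

definition mean_state :: "('n::finite \<Rightarrow> real) \<Rightarrow> real" where
  "mean_state x = (\<Sum>i\<in>UNIV. x i) / real CARD('n)"

definition V :: "('n::finite \<Rightarrow> real) \<Rightarrow> real" where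
  "V x = (\<Sum>i\<in>UNIV. (x i - mean_state x)\<^sup>2) / real CARD('n)"

end

(* Write E(y) = sum_{i,j} a_ij (y_i - y_j)^2, so that y . L y = E(y)/2.  Minimising the
   Rayleigh quotient of L over the hyperplane orthogonal to the constant vector gives an
   eigenvalue mu, which is positive by connectivity; since 0 is an eigenvalue as well,
   lambda_2 <= mu, and E(y) >= 2 mu N V(y).

   When clock (i,j) rings, agent i adopts the opinion of agent j; summing the resulting
   changes of V over all clocks, weighted by their rates, gives exactly -E(y)/N^2.  To turn
   this into a statement about expectations, [0,t] is cut into n cells.  If every cell
   contains at most one tick, S(t) is the state of the discrete chain that performs, cell by
   cell, the adoption of the clock ticking there.  The increments of a cell are independent
   of the past, so one step of this chain multiplies E V by at most
   1 - (t/n) exp(-A t/n) 2 mu / N, with A the total rate, and the n-th power of this factor is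
   at most exp(-mu t/N) once n is large.  Along n = 2^m the events "every cell has at most
   one tick" increase and have probability at least 1 - (A t)^2 / 2^m, so monotone
   convergence gives E V(S(t)) <= exp(-mu t/N) E V(S(0)). *)

theory Submission
  imports Defs
begin

lemma double_sum_antisym_eq_0:
  fixes f :: "'i \<Rightarrow> 'i \<Rightarrow> real"
  assumes "\<And>i j. f i j = - f j i"
  shows "(\<Sum>i\<in>A. \<Sum>j\<in>A. f i j) = 0"
proof -
  have "(\<Sum>i\<in>A. \<Sum>j\<in>A. f i j) = (\<Sum>j\<in>A. \<Sum>i\<in>A. - f j i)"
    by (subst sum.swap) (rule sum.cong[OF refl], rule sum.cong[OF refl], rule assms)
  also have "\<dots> = - (\<Sum>j\<in>A. \<Sum>i\<in>A. f j i)"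
    by (simp add: sum_negf)
  finally show ?thesis by linarith
qed

lemma sum_fun_upd_UNIV:
  fixes f :: "'n::finite \<Rightarrow> 'b::ab_group_add"
  shows "(\<Sum>k\<in>UNIV. (f(i := v)) k) = (\<Sum>k\<in>UNIV. f k) - f i + v"
proof -
  have "(\<Sum>k\<in>UNIV. (f(i := v)) k) = v + (\<Sum>k\<in>UNIV - {i}. f k)"
    by (subst sum.remove[of UNIV i]) (auto intro!: sum.cong)
  also have "\<dots> = (\<Sum>k\<in>UNIV. f k) - f i + v"
    by (simp add: sum.remove[of UNIV i f] algebra_simps)
  finally show ?thesis .
qed

lemma sum_off_diag:
  fixes g :: "'n::finite \<times> 'n \<Rightarrow> 'b::comm_monoid_add"
  shows "(\<Sum>p\<in>off_diag. g p) = (\<Sum>i\<in>UNIV. \<Sum>j\<in>UNIV. if i = j then 0 else g (i, j))"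
proof -
  have "(\<Sum>i\<in>UNIV. \<Sum>j\<in>UNIV. if i = j then 0 else g (i, j))
      = (\<Sum>(i, j)\<in>UNIV \<times> UNIV. if i = j then 0 else g (i, j))"
    by (rule sum.cartesian_product)
  also have "\<dots> = (\<Sum>p\<in>UNIV. if p \<in> off_diag then g p else 0)"
    by (intro sum.cong) (auto simp: off_diag_def)
  also have "\<dots> = (\<Sum>p\<in>off_diag. g p)"
    by (simp add: sum.If_cases)
  finally show ?thesis by simp
qed

lemma sum_nat_le_1_iff:
  fixes d :: "'q \<Rightarrow> nat"
  assumes "finite Q"
  shows "(\<Sum>q\<in>Q. d q) \<le> 1 \<longleftrightarrow> (\<forall>q\<in>Q. d q = 0) \<or> (\<exists>p\<in>Q. \<forall>q\<in>Q. d q = (if q = p then 1 else 0))"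
proof
  assume le: "(\<Sum>q\<in>Q. d q) \<le> 1"
  show "(\<forall>q\<in>Q. d q = 0) \<or> (\<exists>p\<in>Q. \<forall>q\<in>Q. d q = (if q = p then 1 else 0))"
  proof (cases "\<forall>q\<in>Q. d q = 0")
    case False
    then obtain p where p: "p \<in> Q" "d p \<noteq> 0" by blast
    have "d p \<le> 1"
      using member_le_sum[OF p(1), of d] assms le by simp
    moreover have "d q = 0" if "q \<in> Q" "q \<noteq> p" for q
    proof -
      have "(\<Sum>r\<in>{p, q}. d r) \<le> (\<Sum>r\<in>Q. d r)"
        using that p assms by (intro sum_mono2) auto
      then show ?thesis using that p le by simp
    qed
    ultimately show ?thesis
      using p by (metis le_antisym less_one not_le)
  qed simp
next
  assume "(\<forall>q\<in>Q. d q = 0) \<or> (\<exists>p\<in>Q. \<forall>q\<in>Q. d q = (if q = p then 1 else 0))"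
  then show "(\<Sum>q\<in>Q. d q) \<le> 1"
  proof
    assume "\<exists>p\<in>Q. \<forall>q\<in>Q. d q = (if q = p then 1 else 0)"
    then obtain p where "p \<in> Q" "\<And>q. q \<in> Q \<Longrightarrow> d q = (if q = p then 1 else 0)" by blast
    then have "(\<Sum>q\<in>Q. d q) = (\<Sum>q\<in>Q. if q = p then 1 else 0)"
      by (intro sum.cong) auto
    then show ?thesis
      using assms \<open>p \<in> Q\<close> by simp
  qed simp
qed

lemma hd_eq_last_if_adjacent_eq:
  assumes "qs \<noteq> []" and "\<And>l. Suc l < length qs \<Longrightarrow> f (qs ! l) = f (qs ! Suc l)"
  shows "f (hd qs) = f (last qs)"
proof -
  have "f (qs ! l) = f (qs ! 0)" if "l < length qs" for l
    using that
  proof (induction l)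
    case (Suc l)
    then show ?case
      using assms(2)[of l] by (metis Suc_lessD)
  qed simp
  from this[of "length qs - 1"] show ?thesis
    using assms(1) by (simp add: hd_conv_nth last_conv_nth)
qed

lemma linear_coeff_eq_0_if_quadratic_nonneg:
  fixes b c :: real
  assumes "\<And>e. 0 \<le> e * b + e\<^sup>2 * c"
  shows "b = 0"
proof -
  define s where "s = 1 / (\<bar>c\<bar> + 1)"
  have s: "0 < s" "s * c < 1"
    unfolding s_def by (auto simp: field_simps abs_if)
  have "0 \<le> (- s * b) * b + (- s * b)\<^sup>2 * c"
    by (rule assms)
  also have "\<dots> = b\<^sup>2 * (s * (s * c - 1))"
    by (simp add: power2_eq_square algebra_simps)
  finally have "0 \<le> b\<^sup>2 * (s * (s * c - 1))" .
  moreover have "s * (s * c - 1) < 0"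
    using s by (simp add: mult_pos_neg)
  ultimately have "b\<^sup>2 \<le> 0"
    by (smt (verit) mult_pos_neg zero_le_power2)
  then show ?thesis by simp
qed

lemma one_minus_exp_mult_le:
  fixes y :: real
  assumes "0 \<le> y"
  shows "1 - exp (- y) * (1 + y) \<le> y\<^sup>2"
proof -
  have "(1 - y) * (1 + y) \<le> exp (- y) * (1 + y)"
    using exp_ge_add_one_self[of "- y"] assms by (intro mult_right_mono) auto
  then show ?thesis
    by (simp add: power2_eq_square algebra_simps)
qed

lemma power_one_minus_le_exp:
  fixes c :: real
  assumes "c \<le> 1"
  shows "(1 - c) ^ n \<le> exp (- (c * n))"
proof -
  have "(1 - c) ^ n \<le> exp (- c) ^ n"
    using assms exp_ge_add_one_self[of "- c"] by (intro power_mono) auto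
  also have "\<dots> = exp (- (c * n))"
    by (simp add: exp_of_nat_mult[symmetric] mult.commute)
  finally show ?thesis .
qed

section \<open>Rayleigh quotients and eigenvalue counting\<close>

lemma inner_symmetric_matrix:
  fixes A :: "real^'n^'n"
  assumes "transpose A = A"
  shows "x \<bullet> (A *v y) = (A *v x) \<bullet> y"
  by (metis assms dot_lmul_matrix vector_transpose_matrix)

lemma rayleigh_minimum_exists:
  fixes A :: "real^'n^'n"
  assumes U: "subspace U" and nontrivial: "U \<noteq> {0}"
  obtains x0 where "x0 \<in> U" "norm x0 = 1"
    "\<And>x. x \<in> U \<Longrightarrow> (x0 \<bullet> (A *v x0)) * (norm x)\<^sup>2 \<le> x \<bullet> (A *v x)"
proof -
  let ?K = "U \<inter> sphere 0 1"
  have "compact ?K"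
    using closed_subspace[OF U] by (intro closed_Int_compact compact_sphere)
  obtain u where "u \<in> U" "u \<noteq> 0"
    using nontrivial subspace_0[OF U] by blast
  then have "u /\<^sub>R norm u \<in> ?K"
    using U by (simp add: subspace_scale)
  then have "?K \<noteq> {}" by blast
  moreover have "continuous_on ?K (\<lambda>x. x \<bullet> (A *v x))"
    by (intro continuous_intros linear_continuous_on linear_conv_bounded_linear[THEN iffD1]
        matrix_vector_mul_linear)
  ultimately obtain x0 where x0: "x0 \<in> ?K" and min: "\<And>y. y \<in> ?K \<Longrightarrow> x0 \<bullet> (A *v x0) \<le> y \<bullet> (A *v y)"
    using continuous_attains_inf[OF \<open>compact ?K\<close>] by blast
  show ?thesis
  proof (rule that)
    show "x0 \<in> U" "norm x0 = 1" using x0 by auto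
    fix x assume x: "x \<in> U"
    show "(x0 \<bullet> (A *v x0)) * (norm x)\<^sup>2 \<le> x \<bullet> (A *v x)"
    proof (cases "x = 0")
      case False
      have "x /\<^sub>R norm x \<in> ?K"
        using x False U by (simp add: subspace_scale)
      then have "x0 \<bullet> (A *v x0) \<le> (x /\<^sub>R norm x) \<bullet> (A *v (x /\<^sub>R norm x))"
        by (rule min)
      also have "\<dots> = x \<bullet> (A *v x) / (norm x)\<^sup>2"
        by (simp add: matrix_vector_mult_scaleR power2_eq_square field_simps)
      finally show ?thesis
        using False by (simp add: field_simps)
    qed simp
  qed
qed

lemma rayleigh_minimizer_eigenvector:
  fixes A :: "real^'n^'n"
  assumes sym: "transpose A = A" and U: "subspace U"
    and invariant: "\<And>x. x \<in> U \<Longrightarrow> A *v x \<in> U"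
    and x0: "x0 \<in> U" "norm x0 = 1"
    and min: "\<And>x. x \<in> U \<Longrightarrow> (x0 \<bullet> (A *v x0)) * (norm x)\<^sup>2 \<le> x \<bullet> (A *v x)"
  shows "A *v x0 = (x0 \<bullet> (A *v x0)) *\<^sub>R x0"
proof -
  define \<mu> where "\<mu> = x0 \<bullet> (A *v x0)"
  define v where "v = A *v x0 - \<mu> *\<^sub>R x0"
  have orth: "z \<bullet> v = 0" if z: "z \<in> U" for z
  proof -
    \<comment> \<open>minimality of \<open>x0\<close> along the line \<open>x0 + e z\<close> forces the linear term in \<open>e\<close> to vanish\<close>
    have "2 * (z \<bullet> v) = 0"
    proof (rule linear_coeff_eq_0_if_quadratic_nonneg)
      fix e :: real
      have "x0 + e *\<^sub>R z \<in> U"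
        using U x0 z by (simp add: subspace_add subspace_scale)
      then have "\<mu> * (norm (x0 + e *\<^sub>R z))\<^sup>2 \<le> (x0 + e *\<^sub>R z) \<bullet> (A *v (x0 + e *\<^sub>R z))"
        unfolding \<mu>_def by (rule min)
      moreover have "(norm (x0 + e *\<^sub>R z))\<^sup>2 = 1 + 2 * e * (z \<bullet> x0) + e\<^sup>2 * (z \<bullet> z)"
      proof -
        have "x0 \<bullet> x0 = 1"
          using x0(2) by (simp add: dot_square_norm)
        then show ?thesis
          by (simp only: power2_norm_eq_inner)
            (simp add: inner_add_left inner_add_right inner_commute power2_eq_square algebra_simps)
      qed
      moreover have "x0 \<bullet> (A *v z) = z \<bullet> (A *v x0)"
        using inner_symmetric_matrix[OF sym, of x0 z] by (simp add: inner_commute)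
      ultimately show "0 \<le> e * (2 * (z \<bullet> v)) + e\<^sup>2 * (z \<bullet> (A *v z) - \<mu> * (z \<bullet> z))"
        by (simp add: v_def \<mu>_def matrix_vector_right_distrib matrix_vector_mult_scaleR
            inner_add_left inner_add_right inner_diff_right power2_eq_square algebra_simps)
    qed
    then show ?thesis by simp
  qed
  have "v \<in> U"
    unfolding v_def using U x0(1) by (simp add: invariant subspace_diff subspace_scale)
  then have "v \<bullet> v = 0" by (rule orth)
  then show ?thesis by (simp add: v_def \<mu>_def)
qed

lemma poly_charpoly: "poly (charpoly A) \<mu> = det (mat \<mu> - A)"
  unfolding charpoly_def det_def
  by (simp add: poly_sum poly_prod mat_def if_distrib[of "\<lambda>p. poly p \<mu>"] cong: if_cong)

lemma charpoly_root_iff: "poly (charpoly A) \<mu> = 0 \<longleftrightarrow> (\<exists>x. x \<noteq> 0 \<and> A *v x = \<mu> *\<^sub>R x)"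
proof -
  have mat_minus: "(mat \<mu> - A) *v x = \<mu> *\<^sub>R x - A *v x" for x
    by (simp add: vec_eq_iff matrix_vector_mult_def mat_def left_diff_distrib sum_subtractf
        if_distrib[of "\<lambda>u. u * x $ _"])
  have "det (mat \<mu> - A) = 0 \<longleftrightarrow> (\<exists>x. x \<noteq> 0 \<and> (mat \<mu> - A) *v x = 0)"
    by (meson invertible_det_nz invertible_left_inverse matrix_left_invertible_ker)
  then show ?thesis
    by (simp add: poly_charpoly mat_minus eq_commute[of "A *v _"])
qed

lemma charpoly_nonzero_if_psd:
  fixes A :: "real^'n^'n"
  assumes "\<And>x. 0 \<le> x \<bullet> (A *v x)"
  shows "charpoly A \<noteq> 0"
proof
  assume "charpoly A = 0"
  then obtain x where "x \<noteq> 0" "A *v x = (- 1) *\<^sub>R x"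
    using charpoly_root_iff[of A "- 1"] by auto
  moreover from this(2) have "x \<bullet> x \<le> 0"
    using assms[of x] by simp
  ultimately show False
    by (metis inner_gt_zero_iff not_le)
qed

lemma two_le_eig_count:
  assumes "charpoly A \<noteq> 0" "poly (charpoly A) \<kappa> = 0" "poly (charpoly A) \<mu> = 0" "\<kappa> < \<mu>"
  shows "2 \<le> eig_count A \<mu>"
proof -
  let ?R = "{r. poly (charpoly A) r = 0 \<and> r \<le> \<mu>}"
  have "finite ?R"
    using poly_roots_finite[OF assms(1)] by (rule rev_finite_subset) auto
  have "1 \<le> order \<kappa> (charpoly A)" "1 \<le> order \<mu> (charpoly A)"
    using assms(1-3) order_root by (auto simp: Suc_le_eq)
  then have "2 \<le> (\<Sum>r\<in>{\<kappa>, \<mu>}. order r (charpoly A))"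
    using assms(4) by simp
  also have "\<dots> \<le> (\<Sum>r\<in>?R. order r (charpoly A))"
    using \<open>finite ?R\<close> assms(2-4) by (intro sum_mono2) auto
  finally show ?thesis
    by (simp add: eig_count_def)
qed

lemma eig_count_at_largest_root_below:
  assumes "charpoly A \<noteq> 0" "0 < eig_count A y"
  obtains r where "poly (charpoly A) r = 0" "r \<le> y" "eig_count A r = eig_count A y"
proof -
  define R where "R = {r. poly (charpoly A) r = 0 \<and> r \<le> y}"
  have "finite R"
    using poly_roots_finite[OF assms(1)] by (rule rev_finite_subset) (auto simp: R_def)
  moreover have "R \<noteq> {}"
    using assms(2) unfolding eig_count_def R_def[symmetric] by (metis less_irrefl sum.empty)
  ultimately have "Max R \<in> R" by (rule Max_in)
  moreover have "{r. poly (charpoly A) r = 0 \<and> r \<le> Max R} = R"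
    using \<open>finite R\<close> \<open>Max R \<in> R\<close> by (auto simp: R_def)
  ultimately show ?thesis
    by (intro that[of "Max R"]) (auto simp: eig_count_def R_def)
qed

lemma kth_eigenvalue_le:
  assumes "charpoly A \<noteq> 0" "0 < k" "k \<le> eig_count A x"
  shows "kth_eigenvalue A k \<le> x"
proof -
  define T where "T = {r. poly (charpoly A) r = 0 \<and> k \<le> eig_count A r}"
  have below: "\<exists>r\<in>T. r \<le> y" if "k \<le> eig_count A y" for y
  proof -
    have "0 < eig_count A y"
      using that assms(2) by linarith
    then obtain r where "poly (charpoly A) r = 0" "r \<le> y" "eig_count A r = eig_count A y"
      by (rule eig_count_at_largest_root_below[OF assms(1)])
    with that show ?thesis by (auto simp: T_def)
  qed
  have "finite T"
    using poly_roots_finite[OF assms(1)] by (rule rev_finite_subset) (auto simp: T_def)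
  moreover have "T \<noteq> {}"
    using below[OF assms(3)] by blast
  ultimately have "Min T \<in> T" by (rule Min_in)
  have least: "Min T \<le> y" if "k \<le> eig_count A y" for y
    using below[OF that] \<open>finite T\<close> by (meson Min_le order_trans)
  \<comment> \<open>\<open>LEAST\<close> over the reals is meaningful here only because the least element is attained\<close>
  have "kth_eigenvalue A k = Min T"
    unfolding kth_eigenvalue_def
    by (rule Least_equality) (use \<open>Min T \<in> T\<close> least in \<open>auto simp: T_def\<close>)
  then show ?thesis
    using least[OF assms(3)] by simp
qed

lemma exists_nonzero_orthogonal_1:
  assumes "2 \<le> CARD('n::finite)"
  obtains x :: "real^'n" where "x \<noteq> 0" "1 \<bullet> x = 0"
proof -
  obtain i j :: 'n where "i \<noteq> j"
  proof -
    have "\<not> (UNIV::'n set) \<subseteq> {undefined}"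
      using assms card_mono[of "{undefined}" "UNIV::'n set"] by auto
    then show ?thesis
      using that by blast
  qed
  then show ?thesis
    by (intro that[of "axis i 1 - axis j 1"]) (simp_all add: inner_diff_right inner_axis axis_eq_axis)
qed

section \<open>The Dirichlet form and the spectral gap\<close>

definition offdiag_weight :: "('n \<Rightarrow> 'n \<Rightarrow> real) \<Rightarrow> 'n \<Rightarrow> 'n \<Rightarrow> real" where
  "offdiag_weight a i j = (if i = j then 0 else a i j)"

definition dirichlet_form :: "('n::finite \<Rightarrow> 'n \<Rightarrow> real) \<Rightarrow> ('n \<Rightarrow> real) \<Rightarrow> real" where
  "dirichlet_form a x = (\<Sum>i\<in>UNIV. \<Sum>j\<in>UNIV. offdiag_weight a i j * (x i - x j)\<^sup>2)"

lemma offdiag_weight_sym: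
  assumes "\<And>i j. i \<noteq> j \<Longrightarrow> a i j = a j i"
  shows "offdiag_weight a i j = offdiag_weight a j i"
  using assms by (simp add: offdiag_weight_def)

lemma dirichlet_form_nonneg:
  assumes "\<And>i j. i \<noteq> j \<Longrightarrow> 0 \<le> a i j"
  shows "0 \<le> dirichlet_form a x"
  unfolding dirichlet_form_def by (intro sum_nonneg) (simp add: offdiag_weight_def assms)

lemma dirichlet_form_eq_0_imp_const:
  assumes nonneg: "\<And>i j. i \<noteq> j \<Longrightarrow> 0 \<le> a i j" and conn: "weights_connected a"
    and zero: "dirichlet_form a x = 0"
  shows "x i = x j"
proof -
  have terms_nonneg: "0 \<le> offdiag_weight a i j * (x i - x j)\<^sup>2" for i j
    by (simp add: offdiag_weight_def nonneg)
  have zero_terms: "offdiag_weight a i j * (x i - x j)\<^sup>2 = 0" for i j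
    using zero unfolding dirichlet_form_def
    by (simp add: sum_nonneg_eq_0_iff sum_nonneg terms_nonneg)
  have edge: "x i = x j" if "i \<noteq> j" "0 < a i j" for i j
    using zero_terms[of i j] that by (simp add: offdiag_weight_def)
  show ?thesis
  proof (cases "i = j")
    case False
    then obtain qs where "qs \<noteq> []" "hd qs = i" "last qs = j"
      and "\<And>l. Suc l < length qs \<Longrightarrow> qs ! l \<noteq> qs ! Suc l \<and> 0 < a (qs ! l) (qs ! Suc l)"
      using conn unfolding weights_connected_def by blast
    then show ?thesis
      using hd_eq_last_if_adjacent_eq[of qs x] edge by auto
  qed simp
qed

lemma dirichlet_form_eq_0_imp_0:
  fixes a :: "'n::finite \<Rightarrow> 'n \<Rightarrow> real" and x :: "real^'n"
  assumes nonneg: "\<And>i j. i \<noteq> j \<Longrightarrow> 0 \<le> a i j" and conn: "weights_connected a"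
    and "1 \<bullet> x = 0" "dirichlet_form a (($) x) = 0"
  shows "x = 0"
proof -
  fix i :: 'n
  define c where "c = x $ i"
  have "\<forall>k. x $ k = c"
    unfolding c_def using dirichlet_form_eq_0_imp_const[OF nonneg conn assms(4)] by blast
  then have x_const: "x = c *\<^sub>R 1"
    by (simp add: vec_eq_iff)
  then have "c * (1 \<bullet> (1::real^'n)) = 0"
    using assms(3) by (metis inner_scaleR_right)
  moreover have "1 \<bullet> (1::real^'n) \<noteq> 0"
    by (simp add: inner_vec_def)
  ultimately show "x = 0"
    using x_const by simp
qed

lemma laplacian_mult_vec:
  "(laplacian a *v x) $ i = (\<Sum>j\<in>UNIV. offdiag_weight a i j * (x $ i - x $ j))"
proof -
  have "(laplacian a *v x) $ i
      = (\<Sum>j\<in>UNIV. (if i = j then (\<Sum>k\<in>UNIV - {i}. a i k) else - a i j) * x $ j)"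
    by (simp add: matrix_vector_mult_def laplacian_def)
  also have "\<dots> = (\<Sum>k\<in>UNIV - {i}. a i k) * x $ i + (\<Sum>j\<in>UNIV - {i}. - a i j * x $ j)"
    by (subst sum.remove[of UNIV i]) (auto intro!: sum.cong)
  also have "\<dots> = (\<Sum>j\<in>UNIV - {i}. a i j * (x $ i - x $ j))"
    by (simp add: sum_distrib_right right_diff_distrib sum_subtractf sum_negf)
  also have "\<dots> = (\<Sum>j\<in>UNIV. offdiag_weight a i j * (x $ i - x $ j))"
    by (simp add: sum.remove[of UNIV i] offdiag_weight_def)
  finally show ?thesis .
qed

lemma transpose_laplacian:
  assumes "\<And>i j. i \<noteq> j \<Longrightarrow> a i j = a j i"
  shows "transpose (laplacian a) = laplacian a"
  using assms by (simp add: vec_eq_iff transpose_def laplacian_def)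

lemma inner_laplacian_self:
  assumes sym: "\<And>i j. i \<noteq> j \<Longrightarrow> a i j = a j i"
  shows "x \<bullet> (laplacian a *v x) = dirichlet_form a (($) x) / 2"
proof -
  let ?w = "offdiag_weight a"
  let ?P = "\<Sum>i\<in>UNIV. \<Sum>j\<in>UNIV. ?w i j * x $ i * (x $ i - x $ j)"
  have inner: "x \<bullet> (laplacian a *v x) = ?P"
    unfolding inner_vec_def laplacian_mult_vec
    by (intro sum.cong refl) (simp add: sum_distrib_left algebra_simps)
  have swapped: "(\<Sum>i\<in>UNIV. \<Sum>j\<in>UNIV. ?w i j * x $ j * (x $ j - x $ i)) = ?P"
    by (subst sum.swap) (simp add: offdiag_weight_sym[OF sym])
  have "dirichlet_form a (($) x)
      = ?P + (\<Sum>i\<in>UNIV. \<Sum>j\<in>UNIV. ?w i j * x $ j * (x $ j - x $ i))"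
    unfolding dirichlet_form_def sum.distrib[symmetric]
    by (intro sum.cong refl) (simp add: power2_eq_square algebra_simps)
  then show ?thesis
    using inner swapped by simp
qed

lemma V_le_dirichlet_form_if_rayleigh_bound:
  fixes a :: "'n::finite \<Rightarrow> 'n \<Rightarrow> real" and y :: "'n \<Rightarrow> real"
  assumes sym: "\<And>i j. i \<noteq> j \<Longrightarrow> a i j = a j i"
    and rayleigh: "\<And>z. 1 \<bullet> z = 0 \<Longrightarrow> \<mu> * (norm z)\<^sup>2 \<le> z \<bullet> (laplacian a *v z)"
  shows "2 * \<mu> * real CARD('n) * V y \<le> dirichlet_form a y"
proof -
  define z where "z = (\<chi> k. y k - mean_state y)"
  have "1 \<bullet> z = 0"
    by (simp add: z_def inner_vec_def sum_subtractf mean_state_def)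
  then have "\<mu> * (norm z)\<^sup>2 \<le> z \<bullet> (laplacian a *v z)"
    by (rule rayleigh)
  moreover have "(norm z)\<^sup>2 = real CARD('n) * V y"
    by (simp only: power2_norm_eq_inner) (simp add: inner_vec_def z_def V_def power2_eq_square)
  moreover have "z \<bullet> (laplacian a *v z) = dirichlet_form a y / 2"
    by (simp add: inner_laplacian_self[OF sym] z_def dirichlet_form_def)
  ultimately show ?thesis by simp
qed

lemma laplacian_spectral_gap:
  fixes a :: "'n::finite \<Rightarrow> 'n \<Rightarrow> real"
  assumes nonneg: "\<And>i j. i \<noteq> j \<Longrightarrow> 0 \<le> a i j"
    and sym: "\<And>i j. i \<noteq> j \<Longrightarrow> a i j = a j i"
    and conn: "weights_connected a" and card: "2 \<le> CARD('n)"
  obtains \<mu> where "0 < \<mu>" "kth_eigenvalue (laplacian a) 2 \<le> \<mu>"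
    "\<And>y. 2 * \<mu> * real CARD('n) * V y \<le> dirichlet_form a y"
proof -
  define L where "L = laplacian a"
  define U where "U = {x::real^'n. 1 \<bullet> x = 0}"
  have L_sym: "transpose L = L"
    unfolding L_def by (rule transpose_laplacian[OF sym])
  have quad: "x \<bullet> (L *v x) = dirichlet_form a (($) x) / 2" for x
    unfolding L_def by (rule inner_laplacian_self[OF sym])
  have psd: "0 \<le> x \<bullet> (L *v x)" for x
    by (simp add: quad dirichlet_form_nonneg nonneg)
  have L_1: "L *v 1 = 0"
    by (simp add: L_def vec_eq_iff laplacian_mult_vec)
  have U: "subspace U"
    unfolding U_def by (rule subspace_hyperplane)
  have L_U: "L *v x \<in> U" if "x \<in> U" for x
    using that inner_symmetric_matrix[OF L_sym, of 1 x] L_1 by (simp add: U_def)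
  obtain u where "u \<noteq> 0" "u \<in> U"
    using exists_nonzero_orthogonal_1[OF card] by (auto simp: U_def)
  then obtain x0 where x0: "x0 \<in> U" "norm x0 = 1"
    and min: "\<And>x. x \<in> U \<Longrightarrow> (x0 \<bullet> (L *v x0)) * (norm x)\<^sup>2 \<le> x \<bullet> (L *v x)"
    using rayleigh_minimum_exists[OF U] by blast
  define \<mu> where "\<mu> = x0 \<bullet> (L *v x0)"
  have eig: "L *v x0 = \<mu> *\<^sub>R x0"
    unfolding \<mu>_def by (rule rayleigh_minimizer_eigenvector[OF L_sym U L_U x0 min])
  have "\<mu> \<noteq> 0"
  proof
    assume "\<mu> = 0"
    then have "x0 = 0"
      using x0(1) by (intro dirichlet_form_eq_0_imp_0[OF nonneg conn]) (simp_all add: U_def \<mu>_def quad)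
    with x0(2) show False by simp
  qed
  then have "0 < \<mu>"
    using psd[of x0] by (simp add: \<mu>_def)
  have "charpoly L \<noteq> 0"
    by (rule charpoly_nonzero_if_psd[OF psd])
  moreover have "poly (charpoly L) 0 = 0"
    using L_1 by (auto simp: charpoly_root_iff intro!: exI[of _ 1])
  moreover have "poly (charpoly L) \<mu> = 0"
    using eig x0(2) by (auto simp: charpoly_root_iff intro!: exI[of _ x0])
  ultimately have "2 \<le> eig_count L \<mu>"
    using \<open>0 < \<mu>\<close> by (rule two_le_eig_count)
  then have "kth_eigenvalue L 2 \<le> \<mu>"
    using \<open>charpoly L \<noteq> 0\<close> by (intro kth_eigenvalue_le) auto
  moreover have "2 * \<mu> * real CARD('n) * V y \<le> dirichlet_form a y" for y
  proof (rule V_le_dirichlet_form_if_rayleigh_bound[OF sym])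
    fix z :: "real^'n" assume "1 \<bullet> z = 0"
    then show "\<mu> * (norm z)\<^sup>2 \<le> z \<bullet> (laplacian a *v z)"
      using min[of z] by (simp add: U_def L_def \<mu>_def)
  qed
  ultimately show ?thesis
    using \<open>0 < \<mu>\<close> that unfolding L_def by blast
qed

section \<open>The variance under one adoption\<close>

lemma V_nonneg: "0 \<le> V x"
  unfolding V_def by (intro divide_nonneg_nonneg sum_nonneg) simp_all

lemma V_eq_0_if_card_le_1:
  fixes x :: "'n::finite \<Rightarrow> real"
  assumes "CARD('n) < 2"
  shows "V x = 0"
proof -
  have "CARD('n) = 1"
    using assms by (simp add: less_2_cases_iff)
  then obtain i :: 'n where UNIV_eq: "UNIV = {i}"
    using card_1_singletonE by blast
  show ?thesis
    unfolding V_def mean_state_def UNIV_eq by simp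
qed

lemma V_eq_sum_squares:
  fixes x :: "'n::finite \<Rightarrow> real"
  shows "V x = ((\<Sum>k\<in>UNIV. (x k)\<^sup>2) - (\<Sum>k\<in>UNIV. x k)\<^sup>2 / real CARD('n)) / real CARD('n)"
proof -
  define s where "s = (\<Sum>k\<in>UNIV. x k)"
  define N where "N = real CARD('n)"
  have "N > 0" by (simp add: N_def)
  have "(\<Sum>k\<in>UNIV. (x k - s / N)\<^sup>2) = (\<Sum>k\<in>UNIV. (x k)\<^sup>2 - 2 * (s / N) * x k + (s / N)\<^sup>2)"
    by (intro sum.cong refl) (simp add: power2_eq_square algebra_simps)
  also have "\<dots> = (\<Sum>k\<in>UNIV. (x k)\<^sup>2) - (\<Sum>k\<in>UNIV. 2 * (s / N) * x k) + (\<Sum>k\<in>(UNIV::'n set). (s / N)\<^sup>2)"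
    by (simp only: sum.distrib sum_subtractf)
  also have "\<dots> = (\<Sum>k\<in>UNIV. (x k)\<^sup>2) - 2 * (s / N) * s + N * (s / N)\<^sup>2"
    by (simp only: sum_distrib_left[symmetric]) (simp add: s_def N_def)
  also have "\<dots> = (\<Sum>k\<in>UNIV. (x k)\<^sup>2) - s\<^sup>2 / N"
    using \<open>N > 0\<close> by (simp add: field_simps power2_eq_square)
  finally show ?thesis
    by (simp add: V_def mean_state_def s_def N_def)
qed

lemma V_fun_upd:
  fixes y :: "'n::finite \<Rightarrow> real"
  shows "V (y(i := y j)) - V y = ((y j)\<^sup>2 - (y i)\<^sup>2
     - (2 * (\<Sum>k\<in>UNIV. y k) * (y j - y i) + (y i - y j)\<^sup>2) / real CARD('n)) / real CARD('n)"
proof -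
  have "(\<lambda>k. ((y(i := y j)) k)\<^sup>2) = (\<lambda>k. (y k)\<^sup>2)(i := (y j)\<^sup>2)"
    by auto
  then have squares: "(\<Sum>k\<in>UNIV. ((y(i := y j)) k)\<^sup>2) = (\<Sum>k\<in>UNIV. (y k)\<^sup>2) - (y i)\<^sup>2 + (y j)\<^sup>2"
    by (simp only: sum_fun_upd_UNIV)
  show ?thesis
    unfolding V_eq_sum_squares squares sum_fun_upd_UNIV
    by (simp add: power2_eq_square field_simps)
qed

lemma sum_V_fun_upd:
  fixes y :: "'n::finite \<Rightarrow> real"
  assumes sym: "\<And>i j. i \<noteq> j \<Longrightarrow> a i j = a j i"
  shows "(\<Sum>i\<in>UNIV. \<Sum>j\<in>UNIV. offdiag_weight a i j * (V (y(i := y j)) - V y))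
    = - dirichlet_form a y / (real CARD('n))\<^sup>2"
proof -
  let ?w = "offdiag_weight a"
  define s where "s = (\<Sum>k\<in>UNIV. y k)"
  define N where "N = real CARD('n)"
  have "N \<noteq> 0" by (simp add: N_def)
  have "(\<Sum>i\<in>UNIV. \<Sum>j\<in>UNIV. ?w i j * (V (y(i := y j)) - V y))
    = (\<Sum>i\<in>UNIV. \<Sum>j\<in>UNIV. ?w i j * ((y j)\<^sup>2 - (y i)\<^sup>2) - (2 * s / N) * (?w i j * (y j - y i))
         - ?w i j * (y i - y j)\<^sup>2 / N) / N"
    unfolding V_fun_upd s_def[symmetric] N_def[symmetric] sum_divide_distrib
    using \<open>N \<noteq> 0\<close> by (intro sum.cong refl) (simp add: field_simps)
  also have "\<dots> = ((\<Sum>i\<in>UNIV. \<Sum>j\<in>UNIV. ?w i j * ((y j)\<^sup>2 - (y i)\<^sup>2))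
       - (2 * s / N) * (\<Sum>i\<in>UNIV. \<Sum>j\<in>UNIV. ?w i j * (y j - y i))
       - (\<Sum>i\<in>UNIV. \<Sum>j\<in>UNIV. ?w i j * (y i - y j)\<^sup>2) / N) / N"
    by (simp only: sum_subtractf sum_distrib_left[symmetric] sum_divide_distrib[symmetric])
  also have "(\<Sum>i\<in>UNIV. \<Sum>j\<in>UNIV. ?w i j * ((y j)\<^sup>2 - (y i)\<^sup>2)) = 0"
    by (rule double_sum_antisym_eq_0) (simp add: offdiag_weight_sym[OF sym] algebra_simps)
  also have "(\<Sum>i\<in>UNIV. \<Sum>j\<in>UNIV. ?w i j * (y j - y i)) = 0"
    by (rule double_sum_antisym_eq_0) (simp add: offdiag_weight_sym[OF sym] algebra_simps)
  also have "(0 - (2 * s / N) * 0 - (\<Sum>i\<in>UNIV. \<Sum>j\<in>UNIV. ?w i j * (y i - y j)\<^sup>2) / N) / N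
      = - dirichlet_form a y / N\<^sup>2"
    by (simp add: dirichlet_form_def power2_eq_square)
  finally show ?thesis
    by (simp only: N_def)
qed

definition adopt :: "'n \<times> 'n \<Rightarrow> ('n \<Rightarrow> real) \<Rightarrow> 'n \<Rightarrow> real" where
  "adopt p y = (case p of (i, j) \<Rightarrow> y(i := y j))"

lemma V_measurable:
  assumes "\<And>i. (\<lambda>\<omega>. g \<omega> i) \<in> borel_measurable N"
  shows "(\<lambda>\<omega>. V (g \<omega> :: 'n::finite \<Rightarrow> real)) \<in> borel_measurable N"
  using assms unfolding V_def mean_state_def by measurable

lemma adopt_measurable:
  assumes "\<And>i. (\<lambda>\<omega>. g \<omega> i) \<in> borel_measurable N"
  shows "(\<lambda>\<omega>. adopt p (g \<omega>) i) \<in> borel_measurable N"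
  using assms by (cases p) (simp add: adopt_def)

lemma left_lim_eq_if_const:
  assumes "a < s" "\<And>u. a < u \<Longrightarrow> u < s \<Longrightarrow> f u = c"
  shows "left_lim f s = c"
proof -
  have "eventually (\<lambda>u. f u = c) (at_left s)"
    unfolding eventually_at_left_field using assms by blast
  then have "(f \<longlongrightarrow> c) (at_left s)"
    by (rule tendsto_eventually)
  then show ?thesis
    unfolding left_lim_def by (rule tendsto_Lim[rotated]) simp
qed

lemma mono_on_nonnegD:
  fixes N :: "real \<Rightarrow> 'b::order"
  assumes "mono_on {0..} N" "0 \<le> x" "x \<le> y"
  shows "N x \<le> N y"
  using assms by (intro mono_onD[OF assms(1)]) auto

lemma nat_right_continuous_locally_const:
  fixes N :: "real \<Rightarrow> nat"
  assumes "continuous (at_right t) (\<lambda>s. real (N s))"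
  obtains d where "t < d" "\<And>y. t \<le> y \<Longrightarrow> y < d \<Longrightarrow> N y = N t"
proof -
  have "((\<lambda>s. real (N s)) \<longlongrightarrow> real (N t)) (at_right t)"
    using assms by (simp add: continuous_within)
  then have "eventually (\<lambda>s. dist (real (N s)) (real (N t)) < 1 / 2) (at_right t)"
    by (rule tendstoD) simp
  then obtain d where "t < d" and close: "\<And>y. t < y \<Longrightarrow> y < d \<Longrightarrow> \<bar>real (N y) - real (N t)\<bar> < 1 / 2"
    unfolding eventually_at_right_field dist_real_def by blast
  have "N y = N t" if "t \<le> y" "y < d" for y
  proof (rule ccontr)
    assume "N y \<noteq> N t"
    then have "1 \<le> \<bar>real (N y) - real (N t)\<bar>"
      by (cases "N y < N t") (auto simp: nat_less_real_le)
    moreover have "y \<noteq> t"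
      using \<open>N y \<noteq> N t\<close> by auto
    ultimately show False
      using close[of y] that by simp
  qed
  with \<open>t < d\<close> show ?thesis by (rule that)
qed

lemma jump_times_finite:
  fixes N :: "real \<Rightarrow> nat"
  assumes mono: "mono_on {0..} N"
  shows "finite (jump_times N u)"
proof -
  \<comment> \<open>equal values at jump times \<open>s1 < s2\<close> would make \<open>N\<close> constant on \<open>[s1, s2]\<close>\<close>
  have "inj_on N (jump_times N u)"
  proof (rule linorder_inj_onI')
    fix s1 s2 assume s: "s1 \<in> jump_times N u" "s2 \<in> jump_times N u" "s1 < s2"
    show "N s1 \<noteq> N s2"
    proof
      assume eq: "N s1 = N s2"
      have "N v = N s1" if "s1 < v" "v < s2" for v
        using mono_on_nonnegD[OF mono, of s1 v] mono_on_nonnegD[OF mono, of v s2] s that eq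
        by (auto simp: jump_times_def)
      then have "left_lim (\<lambda>v. real (N v)) s2 = real (N s2)"
        using eq by (intro left_lim_eq_if_const[OF \<open>s1 < s2\<close>]) auto
      then show False
        using s(2) by (simp add: jump_times_def)
    qed
  qed
  moreover have "N ` jump_times N u \<subseteq> {..N u}"
    by (auto simp: jump_times_def intro!: mono_on_nonnegD[OF mono])
  ultimately show ?thesis
    by (metis finite_atMost finite_imageD finite_subset)
qed

lemma jump_times_no_increment:
  fixes N :: "real \<Rightarrow> nat"
  assumes mono: "mono_on {0..} N" and "0 \<le> a" "N b = N a"
  shows "jump_times N u \<inter> {a<..b} = {}"
proof -
  have const: "N v = N a" if "a \<le> v" "v \<le> b" for v
    using mono_on_nonnegD[OF mono, of a v] mono_on_nonnegD[OF mono, of v b] assms that by auto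
  have "s \<notin> jump_times N u" if "a < s" "s \<le> b" for s
  proof -
    have "left_lim (\<lambda>v. real (N v)) s = real (N a)"
    proof (rule left_lim_eq_if_const[OF \<open>a < s\<close>])
      fix v assume "a < v" "v < s"
      then show "real (N v) = real (N a)"
        using const[of v] that by simp
    qed
    then show ?thesis
      using const[of s] that by (simp add: jump_times_def)
  qed
  then show ?thesis by auto
qed

lemma counting_path_single_jump:
  fixes N :: "real \<Rightarrow> nat"
  assumes mono: "mono_on {0..} N"
    and right_cont: "\<And>t. 0 \<le> t \<Longrightarrow> continuous (at_right t) (\<lambda>s. real (N s))"
    and "0 \<le> a" "a \<le> b" and jump: "N b = Suc (N a)"
  obtains s0 where "a < s0" "s0 \<le> b"
    "\<And>u. a \<le> u \<Longrightarrow> u < s0 \<Longrightarrow> N u = N a"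
    "\<And>u. s0 \<le> u \<Longrightarrow> u \<le> b \<Longrightarrow> N u = Suc (N a)"
proof -
  define T where "T = {u\<in>{a..b}. N a < N u}"
  define s0 where "s0 = Inf T"
  have "b \<in> T" using assms by (simp add: T_def)
  have bdd: "bdd_below T" by (auto simp: T_def bdd_below_def)
  have "s0 \<le> b" unfolding s0_def using cInf_lower[OF \<open>b \<in> T\<close> bdd] .
  have "a \<le> s0" unfolding s0_def using \<open>b \<in> T\<close> by (intro cInf_greatest) (auto simp: T_def)
  have mono_a: "N a \<le> N u" if "a \<le> u" for u
    using mono_on_nonnegD[OF mono] \<open>0 \<le> a\<close> that .
  have before: "N u = N a" if "a \<le> u" "u < s0" for u
  proof -
    have "u \<notin> T"
      using cInf_lower[OF _ bdd, of u] that by (auto simp: s0_def)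
    then show ?thesis
      using that \<open>s0 \<le> b\<close> mono_a[of u] by (auto simp: T_def)
  qed
  have "N s0 \<noteq> N a"
  proof
    assume "N s0 = N a"
    have "0 \<le> s0"
      using \<open>0 \<le> a\<close> \<open>a \<le> s0\<close> by simp
    obtain d where "s0 < d" and near: "\<And>y. s0 \<le> y \<Longrightarrow> y < d \<Longrightarrow> N y = N s0"
      using nat_right_continuous_locally_const[OF right_cont[OF \<open>0 \<le> s0\<close>]] by blast
    have "d \<le> u" if "u \<in> T" for u
      using that before[of u] near[of u] \<open>N s0 = N a\<close> by (force simp: T_def)
    then have "d \<le> s0"
      unfolding s0_def using \<open>b \<in> T\<close> by (intro cInf_greatest) auto
    with \<open>s0 < d\<close> show False by simp
  qed
  then have "a < s0"
    using \<open>a \<le> s0\<close> by (cases "a = s0") auto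
  have "N s0 = Suc (N a)"
    using \<open>N s0 \<noteq> N a\<close> mono_a[OF \<open>a \<le> s0\<close>] mono_on_nonnegD[OF mono, of s0 b] assms \<open>a \<le> s0\<close> \<open>s0 \<le> b\<close>
    by simp
  then have "N u = Suc (N a)" if "s0 \<le> u" "u \<le> b" for u
    using mono_on_nonnegD[OF mono, of s0 u] mono_on_nonnegD[OF mono, of u b] assms that \<open>a \<le> s0\<close>
    by simp
  with \<open>a < s0\<close> \<open>s0 \<le> b\<close> before show ?thesis
    by (rule that)
qed

lemma jump_times_single_jump:
  fixes N :: "real \<Rightarrow> nat"
  assumes "a < s0" "s0 \<le> b" "u \<le> b"
    and before: "\<And>v. a \<le> v \<Longrightarrow> v < s0 \<Longrightarrow> N v = N a"
    and after: "\<And>v. s0 \<le> v \<Longrightarrow> v \<le> b \<Longrightarrow> N v = Suc (N a)"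
    and "0 \<le> a"
  shows "jump_times N u \<inter> {a<..} = (if s0 \<le> u then {s0} else {})"
proof -
  have "s \<in> jump_times N u \<longleftrightarrow> s = s0" if s: "a < s" "s \<le> u" for s
  proof -
    have left_lim_before: "left_lim (\<lambda>v. real (N v)) s = real (N a)" if "s \<le> s0"
    proof (rule left_lim_eq_if_const[OF \<open>a < s\<close>])
      fix v assume "a < v" "v < s"
      then show "real (N v) = real (N a)"
        using before[of v] that by simp
    qed
    consider "s < s0" | "s = s0" | "s0 < s" by linarith
    then show ?thesis
    proof cases
      case 1
      then show ?thesis
        using left_lim_before s before[of s] by (auto simp: jump_times_def)
    next
      case 2
      then show ?thesis
        using left_lim_before s after[of s] \<open>s0 \<le> b\<close> \<open>u \<le> b\<close> \<open>0 \<le> a\<close>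
        by (auto simp: jump_times_def)
    next
      case 3
      have "left_lim (\<lambda>v. real (N v)) s = real (Suc (N a))"
      proof (rule left_lim_eq_if_const[OF 3])
        fix v assume "s0 < v" "v < s"
        then show "real (N v) = real (Suc (N a))"
          using after[of v] s \<open>u \<le> b\<close> by simp
      qed
      then show ?thesis
        using 3 s after[of s] \<open>u \<le> b\<close> by (auto simp: jump_times_def)
    qed
  qed
  then show ?thesis
    using \<open>a < s0\<close> \<open>0 \<le> a\<close> by (auto simp: jump_times_def)
qed

section \<open>Pathwise dynamics between clock ticks\<close>

locale consensus_path =
  fixes x :: "real \<Rightarrow> 'n::finite \<Rightarrow> real" and N :: "'n \<times> 'n \<Rightarrow> real \<Rightarrow> nat"
  assumes mono: "\<And>p. p \<in> off_diag \<Longrightarrow> mono_on {0..} (N p)"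
    and right_cont: "\<And>p t. p \<in> off_diag \<Longrightarrow> 0 \<le> t \<Longrightarrow> continuous (at_right t) (\<lambda>s. real (N p s))"
    and integral_eq: "\<forall>u\<ge>0. \<forall>i. x u i = x 0 i + (\<Sum>j\<in>UNIV - {i}. \<Sum>s\<in>jump_times (N (i, j)) u.
           (left_lim (\<lambda>u. x u j) s - left_lim (\<lambda>u. x u i) s) *
           (real (N (i, j) s) - left_lim (\<lambda>u. real (N (i, j) u)) s))"
begin

definition jump_effect :: "'n \<Rightarrow> 'n \<Rightarrow> real \<Rightarrow> real" where
  "jump_effect i j s = (left_lim (\<lambda>u. x u j) s - left_lim (\<lambda>u. x u i) s) *
     (real (N (i, j) s) - left_lim (\<lambda>u. real (N (i, j) u)) s)"

lemma path_increment:
  assumes "0 \<le> a" "a \<le> u"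
  shows "x u i = x a i + (\<Sum>j\<in>UNIV - {i}. \<Sum>s\<in>jump_times (N (i, j)) u \<inter> {a<..}. jump_effect i j s)"
proof -
  have split: "(\<Sum>s\<in>jump_times (N (i, j)) u. jump_effect i j s) =
      (\<Sum>s\<in>jump_times (N (i, j)) a. jump_effect i j s)
      + (\<Sum>s\<in>jump_times (N (i, j)) u \<inter> {a<..}. jump_effect i j s)"
    if "j \<in> UNIV - {i}" for j
  proof -
    have "(i, j) \<in> off_diag"
      using that by (simp add: off_diag_def)
    then have "finite (jump_times (N (i, j)) u)"
      by (intro jump_times_finite mono)
    moreover have "jump_times (N (i, j)) u
        = jump_times (N (i, j)) a \<union> (jump_times (N (i, j)) u \<inter> {a<..})"
      using assms by (auto simp: jump_times_def)
    moreover have "jump_times (N (i, j)) a \<inter> (jump_times (N (i, j)) u \<inter> {a<..}) = {}"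
      by (auto simp: jump_times_def)
    ultimately show ?thesis
      by (metis finite_Un sum.union_disjoint)
  qed
  have "0 \<le> u" using assms by simp
  have "x u i = x 0 i + (\<Sum>j\<in>UNIV - {i}. \<Sum>s\<in>jump_times (N (i, j)) u. jump_effect i j s)"
    unfolding jump_effect_def using \<open>0 \<le> u\<close> by (rule integral_eq[rule_format])
  also have "\<dots> = x 0 i + (\<Sum>j\<in>UNIV - {i}. \<Sum>s\<in>jump_times (N (i, j)) a. jump_effect i j s)
      + (\<Sum>j\<in>UNIV - {i}. \<Sum>s\<in>jump_times (N (i, j)) u \<inter> {a<..}. jump_effect i j s)"
    by (simp add: split sum.distrib)
  also have "x 0 i + (\<Sum>j\<in>UNIV - {i}. \<Sum>s\<in>jump_times (N (i, j)) a. jump_effect i j s) = x a i"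
    unfolding jump_effect_def using \<open>0 \<le> a\<close> by (rule integral_eq[rule_format, symmetric])
  finally show ?thesis .
qed

lemma no_jumps_if_no_increment:
  assumes "p \<in> off_diag" "0 \<le> a" "N p b = N p a" "u \<le> b"
  shows "jump_times (N p) u \<inter> {a<..} = {}"
  using jump_times_no_increment[OF mono[OF assms(1)] assms(2,3), of u] assms(4)
  by (auto simp: jump_times_def)

lemma path_const_if_no_increment:
  assumes "0 \<le> a" "a \<le> u" "u \<le> b" and const: "\<And>p. p \<in> off_diag \<Longrightarrow> N p b = N p a"
  shows "x u = x a"
proof
  fix i
  have "jump_times (N (i, j)) u \<inter> {a<..} = {}" if "j \<in> UNIV - {i}" for j
    using that assms by (intro no_jumps_if_no_increment) (auto simp: off_diag_def)
  then show "x u i = x a i"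
    using path_increment[OF assms(1,2), of i] by simp
qed

lemma path_single_jump_time:
  assumes "0 \<le> a" "a \<le> b" and p0: "(i0, j0) \<in> off_diag"
    and jump: "jump_times (N (i0, j0)) b \<inter> {a<..} = {s0}"
    and no_jumps: "\<And>p. p \<in> off_diag \<Longrightarrow> p \<noteq> (i0, j0) \<Longrightarrow> jump_times (N p) b \<inter> {a<..} = {}"
  shows "x b = (x a)(i0 := x a i0 + jump_effect i0 j0 s0)"
proof
  fix i
  show "x b i = ((x a)(i0 := x a i0 + jump_effect i0 j0 s0)) i"
  proof (cases "i = i0")
    case False
    then have "jump_times (N (i, j)) b \<inter> {a<..} = {}" if "j \<in> UNIV - {i}" for j
      using that by (intro no_jumps) (auto simp: off_diag_def)
    then show ?thesis
      using path_increment[OF assms(1,2), of i] False by simp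
  next
    case True
    have "j0 \<in> UNIV - {i0}"
      using p0 by (simp add: off_diag_def)
    moreover have "jump_times (N (i0, j)) b \<inter> {a<..} = {}" if "j \<in> UNIV - {i0} - {j0}" for j
      using that by (intro no_jumps) (auto simp: off_diag_def)
    ultimately have "(\<Sum>j\<in>UNIV - {i0}. \<Sum>s\<in>jump_times (N (i0, j)) b \<inter> {a<..}. jump_effect i0 j s)
        = jump_effect i0 j0 s0"
      by (simp add: sum.remove[of _ j0] jump)
    then show ?thesis
      using path_increment[OF assms(1,2), of i0] True by simp
  qed
qed

lemma path_single_increment:
  assumes "0 \<le> a" "a \<le> b" and p0: "(i0, j0) \<in> off_diag"
    and tick: "N (i0, j0) b = Suc (N (i0, j0) a)"
    and others: "\<And>p. p \<in> off_diag \<Longrightarrow> p \<noteq> (i0, j0) \<Longrightarrow> N p b = N p a"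
  shows "x b = (x a)(i0 := x a j0)"
proof -
  obtain s0 where s0: "a < s0" "s0 \<le> b"
    and before: "\<And>u. a \<le> u \<Longrightarrow> u < s0 \<Longrightarrow> N (i0, j0) u = N (i0, j0) a"
    and after: "\<And>u. s0 \<le> u \<Longrightarrow> u \<le> b \<Longrightarrow> N (i0, j0) u = Suc (N (i0, j0) a)"
    using counting_path_single_jump[OF mono[OF p0] right_cont[OF p0] assms(1,2) tick] by blast
  have x_before: "x u = x a" if "a \<le> u" "u < s0" for u
  proof (rule path_const_if_no_increment[OF \<open>0 \<le> a\<close> that(1) order_refl])
    fix p :: "'n \<times> 'n" assume "p \<in> off_diag"
    then show "N p u = N p a"
      using before[OF that] that s0 assms(1) mono[of p] mono_on_nonnegD[of "N p" a u]
        mono_on_nonnegD[of "N p" u b] others[of p]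
      by (cases "p = (i0, j0)") auto
  qed
  have "left_lim (\<lambda>u. x u k) s0 = x a k" for k
  proof (rule left_lim_eq_if_const[OF s0(1)])
    fix v assume "a < v" "v < s0"
    then show "x v k = x a k" using x_before[of v] by simp
  qed
  moreover have "left_lim (\<lambda>u. real (N (i0, j0) u)) s0 = real (N (i0, j0) a)"
  proof (rule left_lim_eq_if_const[OF s0(1)])
    fix v assume "a < v" "v < s0"
    then show "real (N (i0, j0) v) = real (N (i0, j0) a)" using before[of v] by simp
  qed
  ultimately have "jump_effect i0 j0 s0 = x a j0 - x a i0"
    using after[of s0] s0 by (simp add: jump_effect_def)
  moreover have "x b = (x a)(i0 := x a i0 + jump_effect i0 j0 s0)"
  proof (rule path_single_jump_time[OF assms(1,2) p0])
    show "jump_times (N (i0, j0)) b \<inter> {a<..} = {s0}"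
      using jump_times_single_jump[where N = "N (i0, j0)", OF s0 order_refl before after \<open>0 \<le> a\<close>] s0
      by simp
    show "jump_times (N p) b \<inter> {a<..} = {}" if "p \<in> off_diag" "p \<noteq> (i0, j0)" for p
      using no_jumps_if_no_increment[OF that(1) \<open>0 \<le> a\<close> others[OF that]] by simp
  qed
  ultimately show ?thesis by simp
qed

end

lemma Int_stable_vimage_sets: "Int_stable {X -` A \<inter> space M | A. A \<in> sets N}"
proof (rule Int_stableI)
  fix a b assume "a \<in> {X -` A \<inter> space M | A. A \<in> sets N}" "b \<in> {X -` A \<inter> space M | A. A \<in> sets N}"
  then obtain A B where "a = X -` A \<inter> space M" "b = X -` B \<inter> space M" "A \<in> sets N" "B \<in> sets N"
    by blast
  then show "a \<inter> b \<in> {X -` A \<inter> space M | A. A \<in> sets N}"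
    by (intro CollectI exI[of _ "A \<inter> B"]) auto
qed

lemma (in prob_space) nn_integral_mult_indicator_indep:
  fixes f :: "'a \<Rightarrow> ennreal"
  assumes indep: "indep_sets F (I \<union> J)" and disjoint: "I \<inter> J = {}"
    and stable: "\<And>i. i \<in> I \<union> J \<Longrightarrow> Int_stable (F i)"
    and f: "f \<in> borel_measurable (sigma (space M) (\<Union>i\<in>I. F i))"
    and B: "B \<in> sigma_sets (space M) (\<Union>i\<in>J. F i)"
  shows "(\<integral>\<^sup>+\<omega>. f \<omega> * indicator B \<omega> \<partial>M) = (\<integral>\<^sup>+\<omega>. f \<omega> \<partial>M) * emeasure M B"
proof -
  define K where "K b = (if b then I else J)" for b
  define X where "X b = (if b then f else indicator B)" for b
  have F_events: "F i \<subseteq> events" if "i \<in> I \<union> J" for i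
    using indep that by (simp add: indep_sets_def)
  have gen_space: "(\<Union>i\<in>K b. F i) \<subseteq> Pow (space M)" for b
    using F_events sets.sets_into_space by (simp add: K_def) blast
  have gen_events: "sigma_sets (space M) (\<Union>i\<in>K b. F i) \<subseteq> events" for b
    using F_events by (intro sets.sigma_sets_subset) (auto simp: K_def)
  have X_gen: "X b \<in> borel_measurable (sigma (space M) (\<Union>i\<in>K b. F i))" for b
    using f B gen_space[of False] by (cases b) (auto simp: X_def K_def intro!: borel_measurable_indicator)
  have "indep_sets (\<lambda>b. sigma_sets (space M) (\<Union>i\<in>K b. F i)) UNIV"
  proof (rule indep_sets_collect_sigma)
    show "indep_sets F (\<Union>b\<in>UNIV. K b)"
      using indep by (simp add: K_def UNIV_bool Un_commute)
    show "disjoint_family_on K UNIV"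
      using disjoint by (auto simp: disjoint_family_on_def K_def)
  qed (use stable in \<open>auto simp: K_def split: if_splits\<close>)
  moreover have "{X b -` A \<inter> space M | A. A \<in> sets borel} \<subseteq> sigma_sets (space M) (\<Union>i\<in>K b. F i)" for b
    using measurable_sets[OF X_gen[of b]] gen_space[of b] by auto
  ultimately have "indep_sets (\<lambda>b. {X b -` A \<inter> space M | A. A \<in> sets borel}) UNIV"
    by (rule indep_sets_mono_sets)
  moreover have "random_variable borel (X b)" for b
    using X_gen[of b] measurable_mono[of borel borel "sigma (space M) (\<Union>i\<in>K b. F i)" M]
      gen_space[of b] gen_events[of b]
    by auto
  ultimately have "indep_vars (\<lambda>_. borel) X UNIV"
    unfolding indep_vars_def2 by blast
  then have "(\<integral>\<^sup>+\<omega>. (\<Prod>b\<in>UNIV. X b \<omega>) \<partial>M) = (\<Prod>b\<in>UNIV. \<integral>\<^sup>+\<omega>. X b \<omega> \<partial>M)"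
    by (intro indep_vars_nn_integral) auto
  moreover have "(\<integral>\<^sup>+\<omega>. indicator B \<omega> \<partial>M) = emeasure M B"
    using gen_events[of False] B by (intro nn_integral_indicator) (auto simp: K_def)
  ultimately show ?thesis
    by (simp add: UNIV_bool X_def mult.commute)
qed

lemma nn_integral_mult_add_sum:
  fixes f :: "'a \<Rightarrow> real" and g :: "'p \<Rightarrow> 'a \<Rightarrow> real"
  assumes [measurable]: "(\<lambda>x. ennreal (f x)) \<in> borel_measurable M"
    "\<And>p. (\<lambda>x. ennreal (g p x)) \<in> borel_measurable M"
    and nonneg: "\<And>x. 0 \<le> f x" "\<And>p x. 0 \<le> g p x" "0 \<le> c0" "\<And>p. p \<in> P \<Longrightarrow> 0 \<le> c p"
  shows "(\<integral>\<^sup>+x. f x \<partial>M) * ennreal c0 + (\<Sum>p\<in>P. (\<integral>\<^sup>+x. g p x \<partial>M) * ennreal (c p))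
    = (\<integral>\<^sup>+x. f x * c0 + (\<Sum>p\<in>P. g p x * c p) \<partial>M)"
proof -
  have "(\<integral>\<^sup>+x. f x \<partial>M) * ennreal c0 + (\<Sum>p\<in>P. (\<integral>\<^sup>+x. g p x \<partial>M) * ennreal (c p))
      = (\<integral>\<^sup>+x. ennreal (f x) * ennreal c0 + (\<Sum>p\<in>P. ennreal (g p x) * ennreal (c p)) \<partial>M)"
    by (simp add: nn_integral_add nn_integral_sum nn_integral_multc)
  also have "\<dots> = (\<integral>\<^sup>+x. f x * c0 + (\<Sum>p\<in>P. g p x * c p) \<partial>M)"
  proof (rule nn_integral_cong)
    fix x
    have "(\<Sum>p\<in>P. ennreal (g p x) * ennreal (c p)) = ennreal (\<Sum>p\<in>P. g p x * c p)"
      using nonneg by (simp add: ennreal_mult[symmetric] sum_ennreal)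
    then show "ennreal (f x) * ennreal c0 + (\<Sum>p\<in>P. ennreal (g p x) * ennreal (c p))
        = ennreal (f x * c0 + (\<Sum>p\<in>P. g p x * c p))"
      using nonneg by (simp add: ennreal_mult[symmetric] ennreal_plus[symmetric] sum_nonneg del: ennreal_plus)
  qed
  finally show ?thesis .
qed

section \<open>Time discretisation of the Poisson clocks\<close>

locale consensus_model = prob_space M for M :: "'a measure" +
  fixes a :: "'n::finite \<Rightarrow> 'n \<Rightarrow> real" and Np :: "'n \<times> 'n \<Rightarrow> real \<Rightarrow> 'a \<Rightarrow> nat"
    and S :: "real \<Rightarrow> 'a \<Rightarrow> 'n \<Rightarrow> real" and t :: real
  assumes nonneg: "\<And>i j. i \<noteq> j \<Longrightarrow> 0 \<le> a i j"
    and sym: "\<And>i j. i \<noteq> j \<Longrightarrow> a i j = a j i"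
    and clocks: "poisson_clocks M a Np S"
    and solution: "consensus_solution M Np S"
    and t_nonneg: "0 \<le> t"
begin

definition rate :: "'n \<times> 'n \<Rightarrow> real" where
  "rate q = (case q of (i, j) \<Rightarrow> a i j)"

definition total_rate :: real where
  "total_rate = (\<Sum>q\<in>off_diag. rate q)"

definition grid :: "nat \<Rightarrow> nat \<Rightarrow> real" where
  "grid n k = real k * t / real n"

definition incr :: "nat \<Rightarrow> 'n \<times> 'n \<Rightarrow> nat \<Rightarrow> 'a \<Rightarrow> nat" where
  "incr n q k \<omega> = Np q (grid n (Suc k)) \<omega> - Np q (grid n k) \<omega>"

definition incr_event :: "nat \<Rightarrow> nat \<Rightarrow> ('n \<times> 'n \<Rightarrow> nat) \<Rightarrow> 'a set" where
  "incr_event n k d = {\<omega>\<in>space M. \<forall>q\<in>off_diag. incr n q k \<omega> = d q}"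

definition no_tick :: "nat \<Rightarrow> nat \<Rightarrow> 'a set" where
  "no_tick n k = incr_event n k (\<lambda>q. 0)"

definition single_tick :: "nat \<Rightarrow> 'n \<times> 'n \<Rightarrow> nat \<Rightarrow> 'a set" where
  "single_tick n p k = incr_event n k (\<lambda>q. if q = p then 1 else 0)"

text \<open>The index \<open>None\<close> stands for the initial state, \<open>Some (p, m)\<close> for the increment of clock
  \<open>p\<close> on the \<open>m\<close>-th cell, as in the independence clause of \<^const>\<open>poisson_clocks\<close>.\<close>

definition grid_events :: "nat \<Rightarrow> (('n \<times> 'n) \<times> nat) option \<Rightarrow> 'a set set" where
  "grid_events n x = (case x of
      None \<Rightarrow> {(\<lambda>\<omega>. S 0 \<omega>) -` A \<inter> space M | A. A \<in> sets (Pi\<^sub>M UNIV (\<lambda>_. borel))}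
    | Some (p, m) \<Rightarrow> {(\<lambda>\<omega>. Np p (grid n (Suc m)) \<omega> - Np p (grid n m) \<omega>) -` A \<inter> space M
                       | A. A \<in> sets (count_space UNIV)})"

lemma rate_nonneg: "q \<in> off_diag \<Longrightarrow> 0 \<le> rate q"
  by (auto simp: rate_def off_diag_def nonneg)

lemma total_rate_nonneg: "0 \<le> total_rate"
  unfolding total_rate_def by (intro sum_nonneg rate_nonneg)

lemma grid_0: "grid n 0 = 0"
  by (simp add: grid_def)

lemma grid_nonneg: "0 \<le> grid n k"
  using t_nonneg by (simp add: grid_def)

lemma grid_mono: "k \<le> l \<Longrightarrow> grid n k \<le> grid n l"
  using t_nonneg by (simp add: grid_def divide_right_mono mult_right_mono)

lemma grid_Suc_diff: "0 < n \<Longrightarrow> grid n (Suc k) - grid n k = t / n"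
  by (simp add: grid_def field_simps)

lemma indep_grid_events: "indep_sets (grid_events n) (insert None (Some ` (off_diag \<times> {..<K})))"
proof -
  have "grid n 0 = 0 \<and> (\<forall>m<K. grid n m \<le> grid n (Suc m))"
    by (simp add: grid_0 grid_mono)
  then show ?thesis
    using clocks unfolding poisson_clocks_def grid_events_def by blast
qed

lemma grid_events_subset_events:
  "i \<in> insert None (Some ` (off_diag \<times> {..<K})) \<Longrightarrow> grid_events n i \<subseteq> events"
  using indep_grid_events[of n K] unfolding indep_sets_def by blast

lemma Int_stable_grid_events: "Int_stable (grid_events n i)"
proof (cases i)
  case None
  then show ?thesis
    by (simp only: grid_events_def option.case) (rule Int_stable_vimage_sets)
next
  case (Some x)
  then obtain p m where "i = Some (p, m)"
    by (cases x) auto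
  then show ?thesis
    by (simp only: grid_events_def option.case prod.case) (rule Int_stable_vimage_sets)
qed

lemma incr_vimage_in_grid_events: "incr n q k -` A \<inter> space M \<in> grid_events n (Some (q, k))"
  by (auto simp: grid_events_def incr_def)

lemma incr_vimage_in_events: "q \<in> off_diag \<Longrightarrow> incr n q k -` A \<inter> space M \<in> events"
  using grid_events_subset_events[of "Some (q, k)" "Suc k" n] incr_vimage_in_grid_events[of n q k A]
  by auto

lemma incr_event_in_events: "incr_event n k d \<in> events"
  unfolding incr_event_def
proof (rule sets.sets_Collect_finite_All)
  fix q :: "'n \<times> 'n" assume "q \<in> off_diag"
  then have "incr n q k -` {d q} \<inter> space M \<in> events"
    by (rule incr_vimage_in_events)
  moreover have "{\<omega>\<in>space M. incr n q k \<omega> = d q} = incr n q k -` {d q} \<inter> space M"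
    by auto
  ultimately show "{\<omega>\<in>space M. incr n q k \<omega> = d q} \<in> events"
    by simp
qed simp

lemma no_tick_in_events: "no_tick n k \<in> events"
  by (simp add: no_tick_def incr_event_in_events)

lemma single_tick_in_events: "single_tick n p k \<in> events"
  by (simp add: single_tick_def incr_event_in_events)

lemma prob_incr_eq:
  assumes "q \<in> off_diag" "0 < n"
  shows "prob (incr n q k -` {m} \<inter> space M)
    = (rate q * (t / n)) ^ m / fact m * exp (- (rate q * (t / n)))"
proof -
  have "\<forall>p\<in>off_diag. \<forall>s u m. 0 \<le> s \<longrightarrow> s \<le> u \<longrightarrow>
        measure M {\<omega>\<in>space M. Np p u \<omega> - Np p s \<omega> = m}
          = (case p of (i, j) \<Rightarrow> (a i j * (u - s)) ^ m / fact m * exp (- (a i j * (u - s))))"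
    using clocks unfolding poisson_clocks_def by blast
  from this[rule_format, OF assms(1) grid_nonneg grid_mono[of k "Suc k" n], of m]
  have "measure M {\<omega>\<in>space M. incr n q k \<omega> = m} = (rate q * (t / n)) ^ m / fact m * exp (- (rate q * (t / n)))"
    using grid_Suc_diff[OF assms(2)] by (simp add: incr_def rate_def split: prod.splits)
  moreover have "{\<omega>\<in>space M. incr n q k \<omega> = m} = incr n q k -` {m} \<inter> space M"
    by auto
  ultimately show ?thesis by simp
qed

lemma prob_incr_event:
  assumes "0 < n"
  shows "prob (incr_event n k d)
    = (\<Prod>q\<in>off_diag. (rate q * (t / n)) ^ d q / fact (d q) * exp (- (rate q * (t / n))))"
proof (cases "off_diag = ({} :: ('n \<times> 'n) set)")
  case True
  then have "incr_event n k d = space M"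
    by (simp add: incr_event_def)
  with True show ?thesis
    by (simp add: prob_space)
next
  case False
  define J where "J = (\<lambda>q::'n \<times> 'n. Some (q, k)) ` off_diag"
  define A where "A x = (case x of Some (q, _) \<Rightarrow> incr n q k -` {d q} \<inter> space M | None \<Rightarrow> {})"
    for x :: "(('n \<times> 'n) \<times> nat) option"
  have J: "J \<subseteq> insert None (Some ` (off_diag \<times> {..<Suc k}))" "J \<noteq> {}" "finite J"
    using False by (auto simp: J_def)
  have "\<forall>j\<in>J. A j \<in> grid_events n j"
    by (auto simp: J_def A_def incr_vimage_in_grid_events)
  then have "prob (\<Inter>j\<in>J. A j) = (\<Prod>j\<in>J. prob (A j))"
    by (rule indep_setsD[OF indep_grid_events J])
  moreover have "(\<Inter>j\<in>J. A j) = incr_event n k d"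
    using False by (auto simp: J_def A_def incr_event_def)
  moreover have "(\<Prod>j\<in>J. prob (A j)) = (\<Prod>q\<in>off_diag. prob (incr n q k -` {d q} \<inter> space M))"
    unfolding J_def by (subst prod.reindex) (auto simp: inj_on_def A_def)
  ultimately show ?thesis
    using prob_incr_eq[OF _ assms] by simp
qed

lemma prod_exp_rate: "(\<Prod>q\<in>off_diag. exp (- (rate q * c))) = exp (- (total_rate * c))"
proof -
  have "(\<Prod>q\<in>off_diag. exp (- (rate q * c))) = exp (\<Sum>q\<in>off_diag. - (rate q * c))"
    by (rule exp_sum[symmetric]) simp
  also have "(\<Sum>q\<in>off_diag. - (rate q * c)) = - (total_rate * c)"
    by (simp add: total_rate_def sum_negf sum_distrib_right)
  finally show ?thesis .
qed

lemma prob_no_tick: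
  assumes "0 < n"
  shows "prob (no_tick n k) = exp (- (total_rate * (t / n)))"
  unfolding no_tick_def prob_incr_event[OF assms] by (simp only: prod_exp_rate[symmetric]) simp

lemma prob_single_tick:
  assumes "0 < n" "p \<in> off_diag"
  shows "prob (single_tick n p k) = rate p * (t / n) * exp (- (total_rate * (t / n)))"
proof -
  have "prob (single_tick n p k)
      = (\<Prod>q\<in>off_diag. (if q = p then rate q * (t / n) else 1) * exp (- (rate q * (t / n))))"
    unfolding single_tick_def prob_incr_event[OF assms(1)] by (intro prod.cong refl) auto
  also have "\<dots> = (\<Prod>q\<in>off_diag. if q = p then rate q * (t / n) else 1) * exp (- (total_rate * (t / n)))"
    by (simp only: prod.distrib prod_exp_rate)
  also have "\<dots> = rate p * (t / n) * exp (- (total_rate * (t / n)))"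
    using assms(2) by (simp add: prod.delta)
  finally show ?thesis .
qed

lemma single_tick_disjoint:
  "p \<in> off_diag \<Longrightarrow> p' \<in> off_diag \<Longrightarrow> p \<noteq> p' \<Longrightarrow> single_tick n p k \<inter> single_tick n p' k = {}"
  by (auto simp: single_tick_def incr_event_def)

lemma no_tick_single_tick_disjoint: "p \<in> off_diag \<Longrightarrow> no_tick n k \<inter> single_tick n p k = {}"
  by (auto simp: no_tick_def single_tick_def incr_event_def)

lemma prob_some_single_tick:
  assumes "0 < n"
  shows "prob (\<Union>p\<in>off_diag. single_tick n p k) = total_rate * (t / n) * exp (- (total_rate * (t / n)))"
proof -
  have "prob (\<Union>p\<in>off_diag. single_tick n p k) = (\<Sum>p\<in>off_diag. prob (single_tick n p k))"
    using single_tick_disjoint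
    by (intro finite_measure_finite_Union) (auto simp: disjoint_family_on_def single_tick_in_events)
  also have "\<dots> = (\<Sum>p\<in>off_diag. rate p * (t / n) * exp (- (total_rate * (t / n))))"
    by (simp add: prob_single_tick[OF assms])
  also have "\<dots> = total_rate * (t / n) * exp (- (total_rate * (t / n)))"
    by (simp only: total_rate_def sum_distrib_right)
  finally show ?thesis .
qed

lemma clock_path:
  assumes "p \<in> off_diag" "\<omega> \<in> space M"
  shows "mono_on {0..} (\<lambda>u. Np p u \<omega>)" "\<And>u. 0 \<le> u \<Longrightarrow> continuous (at_right u) (\<lambda>s. real (Np p s \<omega>))"
  using clocks assms unfolding poisson_clocks_def by blast+

lemma AE_consensus_path: "AE \<omega> in M. consensus_path (\<lambda>u. S u \<omega>) (\<lambda>p u. Np p u \<omega>)"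
proof -
  have "AE \<omega> in M. \<forall>u\<ge>0. \<forall>i. S u \<omega> i = S 0 \<omega> i + (\<Sum>j\<in>UNIV - {i}. \<Sum>s\<in>jump_times (\<lambda>u. Np (i, j) u \<omega>) u.
           (left_lim (\<lambda>u. S u \<omega> j) s - left_lim (\<lambda>u. S u \<omega> i) s) *
           (real (Np (i, j) s \<omega>) - left_lim (\<lambda>u. real (Np (i, j) u \<omega>)) s))"
    using solution unfolding consensus_solution_def by blast
  then show ?thesis
  proof (rule AE_mp[OF _ AE_I2], intro impI)
    fix \<omega> assume "\<omega> \<in> space M" and integral_eq: "\<forall>u\<ge>0. \<forall>i. S u \<omega> i = S 0 \<omega> i
      + (\<Sum>j\<in>UNIV - {i}. \<Sum>s\<in>jump_times (\<lambda>u. Np (i, j) u \<omega>) u.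
           (left_lim (\<lambda>u. S u \<omega> j) s - left_lim (\<lambda>u. S u \<omega> i) s) *
           (real (Np (i, j) s \<omega>) - left_lim (\<lambda>u. real (Np (i, j) u \<omega>)) s))"
    show "consensus_path (\<lambda>u. S u \<omega>) (\<lambda>p u. Np p u \<omega>)"
      using clock_path[OF _ \<open>\<omega> \<in> space M\<close>] integral_eq by (unfold consensus_path_def) blast
  qed
qed

definition at_most_one_tick :: "nat \<Rightarrow> nat \<Rightarrow> 'a set" where
  "at_most_one_tick n k = no_tick n k \<union> (\<Union>p\<in>off_diag. single_tick n p k)"

definition ticks_separated :: "nat \<Rightarrow> 'a set" where
  "ticks_separated n = {\<omega>\<in>space M. \<forall>k<n. \<omega> \<in> at_most_one_tick n k}"

lemma at_most_one_tick_in_events: "at_most_one_tick n k \<in> events"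
  unfolding at_most_one_tick_def
  by (intro sets.Un no_tick_in_events sets.finite_UN single_tick_in_events) auto

lemma ticks_separated_in_events: "ticks_separated n \<in> events"
proof -
  have "ticks_separated n = space M \<inter> (\<Inter>k\<in>{..<n}. at_most_one_tick n k)"
    by (auto simp: ticks_separated_def)
  then show ?thesis
    using at_most_one_tick_in_events by (auto intro!: sets.Int sets.countable_INT')
qed

lemma prob_not_at_most_one_tick:
  assumes "0 < n"
  shows "prob (space M - at_most_one_tick n k) \<le> (total_rate * (t / n))\<^sup>2"
proof -
  have "no_tick n k \<inter> (\<Union>p\<in>off_diag. single_tick n p k) = {}"
    using no_tick_single_tick_disjoint by blast
  then have "prob (at_most_one_tick n k) = prob (no_tick n k) + prob (\<Union>p\<in>off_diag. single_tick n p k)"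
    unfolding at_most_one_tick_def
    by (intro finite_measure_Union no_tick_in_events sets.finite_UN single_tick_in_events) auto
  also have "\<dots> = exp (- (total_rate * (t / n))) * (1 + total_rate * (t / n))"
    by (simp add: prob_no_tick[OF assms] prob_some_single_tick[OF assms] algebra_simps)
  finally have "prob (space M - at_most_one_tick n k) = 1 - exp (- (total_rate * (t / n))) * (1 + total_rate * (t / n))"
    by (simp add: prob_compl at_most_one_tick_in_events)
  also have "\<dots> \<le> (total_rate * (t / n))\<^sup>2"
    using total_rate_nonneg t_nonneg by (intro one_minus_exp_mult_le) simp
  finally show ?thesis .
qed

lemma prob_not_ticks_separated:
  assumes "0 < n"
  shows "prob (space M - ticks_separated n) \<le> real n * (total_rate * (t / n))\<^sup>2"
proof -
  have "space M - ticks_separated n = (\<Union>k\<in>{..<n}. space M - at_most_one_tick n k)"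
    by (auto simp: ticks_separated_def)
  moreover have "prob (\<Union>k\<in>{..<n}. space M - at_most_one_tick n k)
      \<le> (\<Sum>k\<in>{..<n}. prob (space M - at_most_one_tick n k))"
    using at_most_one_tick_in_events by (intro finite_measure_subadditive_finite) auto
  ultimately have "prob (space M - ticks_separated n) \<le> (\<Sum>k\<in>{..<n}. prob (space M - at_most_one_tick n k))"
    by simp
  also have "\<dots> \<le> (\<Sum>k\<in>{..<n}. (total_rate * (t / n))\<^sup>2)"
    by (intro sum_mono prob_not_at_most_one_tick[OF assms])
  finally show ?thesis by simp
qed

lemma at_most_one_tick_iff:
  assumes "\<omega> \<in> space M"
  shows "\<omega> \<in> at_most_one_tick n k \<longleftrightarrow> (\<Sum>q\<in>off_diag. incr n q k \<omega>) \<le> 1"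
  using assms sum_nat_le_1_iff[of off_diag "\<lambda>q. incr n q k \<omega>"]
  by (auto simp: at_most_one_tick_def no_tick_def single_tick_def incr_event_def)

lemma ticks_separated_double:
  assumes "0 < n"
  shows "ticks_separated n \<subseteq> ticks_separated (2 * n)"
proof
  fix \<omega> assume \<omega>: "\<omega> \<in> ticks_separated n"
  then have "\<omega> \<in> space M" by (simp add: ticks_separated_def)
  have "\<omega> \<in> at_most_one_tick (2 * n) k'" if "k' < 2 * n" for k'
  proof -
    \<comment> \<open>cell \<open>k'\<close> of the finer grid lies inside cell \<open>k' div 2\<close> of the coarser one\<close>
    define k where "k = k' div 2"
    have "k < n" using that by (simp add: k_def)
    have "real (2 * k) \<le> real k'" "real (Suc k') \<le> real (2 * Suc k)"
      by (simp_all add: k_def)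
    then have "real (2 * k) * t / real (2 * n) \<le> real k' * t / real (2 * n)"
      "real (Suc k') * t / real (2 * n) \<le> real (2 * Suc k) * t / real (2 * n)"
      using t_nonneg by (intro divide_right_mono mult_right_mono; simp)+
    moreover have "real (2 * Suc k) * t / real (2 * n) = real (Suc k) * t / real n"
      using assms by (simp add: field_simps)
    ultimately have coarse: "grid n k \<le> grid (2 * n) k'" "grid (2 * n) (Suc k') \<le> grid n (Suc k)"
      using assms by (simp_all add: grid_def)
    have "incr (2 * n) q k' \<omega> \<le> incr n q k \<omega>" if "q \<in> off_diag" for q
      using mono_on_nonnegD[OF clock_path(1)[OF that \<open>\<omega> \<in> space M\<close>] grid_nonneg coarse(1)]
        mono_on_nonnegD[OF clock_path(1)[OF that \<open>\<omega> \<in> space M\<close>] grid_nonneg coarse(2)]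
      by (simp add: incr_def)
    then have "(\<Sum>q\<in>off_diag. incr (2 * n) q k' \<omega>) \<le> (\<Sum>q\<in>off_diag. incr n q k \<omega>)"
      by (intro sum_mono)
    also have "\<dots> \<le> 1"
      using \<omega> \<open>k < n\<close> \<open>\<omega> \<in> space M\<close> by (simp add: ticks_separated_def at_most_one_tick_iff)
    finally show ?thesis
      using \<open>\<omega> \<in> space M\<close> by (simp add: at_most_one_tick_iff)
  qed
  then show "\<omega> \<in> ticks_separated (2 * n)"
    using \<open>\<omega> \<in> space M\<close> by (simp add: ticks_separated_def)
qed

text \<open>In cell \<open>k\<close>, agent \<open>i\<close> adopts the opinion of \<open>j\<close> exactly when \<open>(i, j)\<close> is the only clock
  ticking there.\<close>

primrec chain :: "nat \<Rightarrow> nat \<Rightarrow> 'a \<Rightarrow> 'n \<Rightarrow> real" where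
  "chain n 0 = S 0"
| "chain n (Suc k) = (\<lambda>\<omega> i. chain n k \<omega> i
     + (\<Sum>j\<in>UNIV - {i}. indicator (single_tick n (i, j) k) \<omega> * (chain n k \<omega> j - chain n k \<omega> i)))"

lemma chain_Suc_single_tick:
  assumes "p \<in> off_diag" "\<omega> \<in> single_tick n p k"
  shows "chain n (Suc k) \<omega> = adopt p (chain n k \<omega>)"
proof
  fix i
  obtain i0 j0 where p: "p = (i0, j0)" by (cases p)
  have "indicator (single_tick n (i, j) k) \<omega> = (if (i, j) = p then 1 else (0::real))"
    if "j \<in> UNIV - {i}" for j
  proof (cases "(i, j) = p")
    case False
    have "(i, j) \<in> off_diag"
      using that by (simp add: off_diag_def)
    then have "\<omega> \<notin> single_tick n (i, j) k"
      using single_tick_disjoint[OF assms(1) _ False[symmetric], of n k] assms(2) by blast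
    then show ?thesis
      using False by simp
  qed (use assms(2) in simp)
  then have "(\<Sum>j\<in>UNIV - {i}. indicator (single_tick n (i, j) k) \<omega> * (chain n k \<omega> j - chain n k \<omega> i))
      = (\<Sum>j\<in>UNIV - {i}. if (i, j) = p then chain n k \<omega> j - chain n k \<omega> i else 0)"
    by (intro sum.cong) auto
  also have "\<dots> = (if i = i0 then chain n k \<omega> j0 - chain n k \<omega> i0 else 0)"
    using assms(1) by (auto simp: p off_diag_def sum.delta' intro: sum.neutral)
  finally show "chain n (Suc k) \<omega> i = adopt p (chain n k \<omega>) i"
    by (simp add: adopt_def p)
qed

lemma chain_Suc_no_single_tick:
  assumes "\<omega> \<notin> (\<Union>p\<in>off_diag. single_tick n p k)"
  shows "chain n (Suc k) \<omega> = chain n k \<omega>"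
proof
  fix i
  have "indicator (single_tick n (i, j) k) \<omega> = (0::real)" if "j \<in> UNIV - {i}" for j
  proof -
    have "(i, j) \<in> off_diag"
      using that by (simp add: off_diag_def)
    then show ?thesis
      using assms by auto
  qed
  then have "(\<Sum>j\<in>UNIV - {i}. indicator (single_tick n (i, j) k) \<omega> * (chain n k \<omega> j - chain n k \<omega> i)) = 0"
    by (intro sum.neutral) simp
  then show "chain n (Suc k) \<omega> i = chain n k \<omega> i"
    by simp
qed

lemma S_grid_Suc_no_tick:
  assumes path: "consensus_path (\<lambda>u. S u \<omega>) (\<lambda>p u. Np p u \<omega>)" and "\<omega> \<in> no_tick n k"
  shows "S (grid n (Suc k)) \<omega> = S (grid n k) \<omega>"
proof (rule consensus_path.path_const_if_no_increment[OF path grid_nonneg grid_mono order_refl])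
  fix q :: "'n \<times> 'n" assume "q \<in> off_diag"
  moreover have "\<omega> \<in> space M"
    using assms(2) by (simp add: no_tick_def incr_event_def)
  ultimately have "Np q (grid n k) \<omega> \<le> Np q (grid n (Suc k)) \<omega>"
    using mono_on_nonnegD[OF clock_path(1) grid_nonneg grid_mono] by simp
  moreover have "incr n q k \<omega> = 0"
    using assms(2) \<open>q \<in> off_diag\<close> by (simp add: no_tick_def incr_event_def)
  ultimately show "Np q (grid n (Suc k)) \<omega> = Np q (grid n k) \<omega>"
    by (simp add: incr_def)
qed simp

lemma S_grid_Suc_single_tick:
  assumes path: "consensus_path (\<lambda>u. S u \<omega>) (\<lambda>p u. Np p u \<omega>)"
    and "p \<in> off_diag" "\<omega> \<in> single_tick n p k"
  shows "S (grid n (Suc k)) \<omega> = adopt p (S (grid n k) \<omega>)"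
proof -
  obtain i0 j0 where p: "p = (i0, j0)" by (cases p)
  have "\<omega> \<in> space M"
    using assms(3) by (simp add: single_tick_def incr_event_def)
  have incr_le: "Np q (grid n k) \<omega> \<le> Np q (grid n (Suc k)) \<omega>" if "q \<in> off_diag" for q
    using mono_on_nonnegD[OF clock_path(1)[OF that \<open>\<omega> \<in> space M\<close>] grid_nonneg grid_mono] by simp
  have incr_p: "incr n q k \<omega> = (if q = p then 1 else 0)" if "q \<in> off_diag" for q
    using assms(3) that by (simp add: single_tick_def incr_event_def)
  have "S (grid n (Suc k)) \<omega> = (S (grid n k) \<omega>)(i0 := S (grid n k) \<omega> j0)"
  proof (rule consensus_path.path_single_increment[OF path grid_nonneg grid_mono])
    show "(i0, j0) \<in> off_diag"
      using assms(2) p by simp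
    show "Np (i0, j0) (grid n (Suc k)) \<omega> = Suc (Np (i0, j0) (grid n k) \<omega>)"
      using incr_p[OF assms(2)] incr_le[OF assms(2)] p by (simp add: incr_def)
    fix q assume "q \<in> off_diag" "q \<noteq> (i0, j0)"
    then show "Np q (grid n (Suc k)) \<omega> = Np q (grid n k) \<omega>"
      using incr_p[of q] incr_le[of q] p by (simp add: incr_def)
  qed simp
  then show ?thesis
    by (simp add: adopt_def p)
qed

lemma S_eq_chain:
  assumes "0 < n" and \<omega>: "\<omega> \<in> ticks_separated n"
    and path: "consensus_path (\<lambda>u. S u \<omega>) (\<lambda>p u. Np p u \<omega>)"
  shows "S t \<omega> = chain n n \<omega>"
proof -
  have "S (grid n k) \<omega> = chain n k \<omega>" if "k \<le> n" for k
    using that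
  proof (induction k)
    case (Suc k)
    then have IH: "S (grid n k) \<omega> = chain n k \<omega>" by simp
    have "\<omega> \<in> at_most_one_tick n k"
      using \<omega> Suc.prems by (simp add: ticks_separated_def)
    then consider "\<omega> \<in> no_tick n k" | p where "p \<in> off_diag" "\<omega> \<in> single_tick n p k"
      by (auto simp: at_most_one_tick_def)
    then show ?case
    proof cases
      case 1
      then have "\<omega> \<notin> (\<Union>p\<in>off_diag. single_tick n p k)"
        using no_tick_single_tick_disjoint by blast
      with 1 show ?thesis
        using IH S_grid_Suc_no_tick[OF path] chain_Suc_no_single_tick by simp
    next
      case 2
      then show ?thesis
        using IH S_grid_Suc_single_tick[OF path] chain_Suc_single_tick by simp
    qed
  qed (simp add: grid_0)
  from this[of n] show ?thesis
    using \<open>0 < n\<close> by (simp add: grid_def)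
qed

definition grid_sigma :: "nat \<Rightarrow> (('n \<times> 'n) \<times> nat) option set \<Rightarrow> 'a measure" where
  "grid_sigma n K = sigma (space M) (\<Union>i\<in>K. grid_events n i)"

definition past :: "nat \<Rightarrow> (('n \<times> 'n) \<times> nat) option set" where
  "past k = insert None (Some ` (off_diag \<times> {..<k}))"

definition cell :: "nat \<Rightarrow> (('n \<times> 'n) \<times> nat) option set" where
  "cell k = Some ` (off_diag \<times> {k})"

lemma grid_events_Pow: "(\<Union>i\<in>K. grid_events n i) \<subseteq> Pow (space M)"
  by (auto simp: grid_events_def split: option.splits)

lemma space_grid_sigma [simp]: "space (grid_sigma n K) = space M"
  unfolding grid_sigma_def using grid_events_Pow by simp

lemma sets_grid_sigma: "sets (grid_sigma n K) = sigma_sets (space M) (\<Union>i\<in>K. grid_events n i)"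
  unfolding grid_sigma_def using grid_events_Pow by simp

lemma grid_sigma_subset_events: "K \<subseteq> past k \<Longrightarrow> sets (grid_sigma n K) \<subseteq> events"
  unfolding sets_grid_sigma past_def
  by (rule sets.sigma_sets_subset) (use grid_events_subset_events in blast)

lemma measurable_grid_sigma_imp_measurable:
  "K \<subseteq> past k \<Longrightarrow> f \<in> borel_measurable (grid_sigma n K) \<Longrightarrow> f \<in> borel_measurable M"
  using measurable_mono[of borel borel "grid_sigma n K" M] grid_sigma_subset_events by auto

lemma single_tick_in_grid_sigma:
  assumes "\<And>q. q \<in> off_diag \<Longrightarrow> Some (q, k) \<in> K"
  shows "single_tick n p k \<in> sets (grid_sigma n K)"
proof -
  have "single_tick n p k
      = {\<omega>\<in>space (grid_sigma n K). \<forall>q\<in>off_diag. incr n q k \<omega> = (if q = p then 1 else 0)}"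
    by (simp add: single_tick_def incr_event_def)
  also have "\<dots> \<in> sets (grid_sigma n K)"
  proof (rule sets.sets_Collect_finite_All)
    fix q :: "'n \<times> 'n" assume "q \<in> off_diag"
    have "incr n q k -` {if q = p then 1 else 0} \<inter> space M \<in> sets (grid_sigma n K)"
      unfolding sets_grid_sigma
      by (rule sigma_sets.Basic) (use assms[OF \<open>q \<in> off_diag\<close>] incr_vimage_in_grid_events in blast)
    moreover have "{\<omega>\<in>space (grid_sigma n K). incr n q k \<omega> = (if q = p then 1 else 0)}
        = incr n q k -` {if q = p then 1 else 0} \<inter> space M"
      by auto
    ultimately show "{\<omega>\<in>space (grid_sigma n K). incr n q k \<omega> = (if q = p then 1 else 0)}
        \<in> sets (grid_sigma n K)"
      by simp
  qed simp
  finally show ?thesis .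
qed

lemma S0_measurable_grid_sigma:
  assumes "None \<in> K"
  shows "(\<lambda>\<omega>. S 0 \<omega> i) \<in> borel_measurable (grid_sigma n K)"
proof -
  have "S 0 \<in> measurable (grid_sigma n K) (Pi\<^sub>M (UNIV::'n set) (\<lambda>_. borel :: real measure))"
  proof (rule measurableI)
    fix A assume "A \<in> sets (Pi\<^sub>M (UNIV::'n set) (\<lambda>_. borel :: real measure))"
    then have "S 0 -` A \<inter> space M \<in> grid_events n None"
      by (auto simp: grid_events_def)
    then show "S 0 -` A \<inter> space (grid_sigma n K) \<in> sets (grid_sigma n K)"
      unfolding sets_grid_sigma using assms by (auto intro!: sigma_sets.Basic)
  qed (simp add: space_PiM)
  then show ?thesis
    by (rule measurable_compose[OF _ measurable_component_singleton]) simp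
qed

lemma chain_measurable_past:
  "j \<le> k \<Longrightarrow> (\<lambda>\<omega>. chain n j \<omega> i) \<in> borel_measurable (grid_sigma n (past k))"
proof (induction j arbitrary: i)
  case 0
  then show ?case
    by (simp add: S0_measurable_grid_sigma past_def)
next
  case (Suc j)
  have "single_tick n p j \<in> sets (grid_sigma n (past k))" for p
    using Suc.prems by (intro single_tick_in_grid_sigma) (auto simp: past_def)
  with Suc show ?case
    by (simp only: chain.simps) (intro borel_measurable_add borel_measurable_sum borel_measurable_times
        borel_measurable_diff borel_measurable_indicator; simp)
qed

lemma nn_integral_indep_past_cell:
  fixes f :: "'a \<Rightarrow> ennreal"
  assumes "f \<in> borel_measurable (grid_sigma n (past k))" "B \<in> sets (grid_sigma n (cell k))"
  shows "(\<integral>\<^sup>+\<omega>. f \<omega> * indicator B \<omega> \<partial>M) = (\<integral>\<^sup>+\<omega>. f \<omega> \<partial>M) * emeasure M B"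
proof (rule nn_integral_mult_indicator_indep)
  have "past k \<union> cell k = insert None (Some ` (off_diag \<times> {..<Suc k}))"
    by (auto simp: past_def cell_def lessThan_Suc)
  then show "indep_sets (grid_events n) (past k \<union> cell k)"
    using indep_grid_events[of n "Suc k"] by simp
  show "past k \<inter> cell k = {}"
    by (auto simp: past_def cell_def)
  show "f \<in> borel_measurable (sigma (space M) (\<Union>i\<in>past k. grid_events n i))"
    using assms(1) by (simp add: grid_sigma_def)
  show "B \<in> sigma_sets (space M) (\<Union>i\<in>cell k. grid_events n i)"
    using assms(2) by (simp add: sets_grid_sigma)
qed (rule Int_stable_grid_events)

section \<open>Decay of the expected variance\<close>

text \<open>Each clock \<open>q\<close> is the only one ticking in a cell with probability
  \<open>rate q * (t / n) * exp (- total_rate * (t / n))\<close>, which produces the factor below.\<close>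

definition step_factor :: "real \<Rightarrow> nat \<Rightarrow> real" where
  "step_factor \<mu> n = 1 - t / n * exp (- (total_rate * (t / n))) * 2 * \<mu> / real CARD('n)"

lemma V_adopt_average_le:
  assumes poincare: "\<And>y. 2 * \<mu> * real CARD('n) * V y \<le> dirichlet_form a y" and "0 \<le> c"
  shows "V y * (1 - (\<Sum>p\<in>off_diag. rate p * c)) + (\<Sum>p\<in>off_diag. V (adopt p y) * (rate p * c))
    \<le> (1 - c * 2 * \<mu> / real CARD('n)) * V y"
proof -
  define N where "N = real CARD('n)"
  have "N > 0" by (simp add: N_def)
  have "(\<Sum>p\<in>off_diag. rate p * (V (adopt p y) - V y))
      = (\<Sum>i\<in>UNIV. \<Sum>j\<in>UNIV. offdiag_weight a i j * (V (y(i := y j)) - V y))"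
    unfolding sum_off_diag by (intro sum.cong refl) (simp add: offdiag_weight_def rate_def adopt_def)
  also have "\<dots> = - dirichlet_form a y / N\<^sup>2"
    unfolding N_def by (rule sum_V_fun_upd[OF sym])
  finally have jumps: "(\<Sum>p\<in>off_diag. rate p * (V (adopt p y) - V y)) = - dirichlet_form a y / N\<^sup>2" .
  have "V y * (1 - (\<Sum>p\<in>off_diag. rate p * c)) + (\<Sum>p\<in>off_diag. V (adopt p y) * (rate p * c))
      = V y + c * (\<Sum>p\<in>off_diag. rate p * (V (adopt p y) - V y))"
    by (simp add: algebra_simps sum_distrib_left sum_distrib_right sum_subtractf)
  also have "\<dots> = V y - c * dirichlet_form a y / N\<^sup>2"
    by (simp add: jumps)
  also have "\<dots> \<le> V y - c * (2 * \<mu> * N * V y) / N\<^sup>2"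
    using poincare[of y] \<open>0 \<le> c\<close> unfolding N_def
    by (intro diff_left_mono divide_right_mono mult_left_mono) auto
  also have "\<dots> = (1 - c * 2 * \<mu> / N) * V y"
    using \<open>N > 0\<close> by (simp add: field_simps power2_eq_square)
  finally show ?thesis
    by (simp add: N_def)
qed

definition no_single_tick :: "nat \<Rightarrow> nat \<Rightarrow> 'a set" where
  "no_single_tick n k = space M - (\<Union>p\<in>off_diag. single_tick n p k)"

lemma no_single_tick_in_events: "no_single_tick n k \<in> events"
  unfolding no_single_tick_def by (auto intro!: sets.Diff sets.finite_UN single_tick_in_events)

lemma prob_no_single_tick:
  assumes "0 < n"
  shows "prob (no_single_tick n k) = 1 - total_rate * (t / n * exp (- (total_rate * (t / n))))"
proof -
  have "prob (no_single_tick n k) = 1 - prob (\<Union>p\<in>off_diag. single_tick n p k)"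
    unfolding no_single_tick_def by (intro prob_compl sets.finite_UN single_tick_in_events) auto
  then show ?thesis
    by (simp add: prob_some_single_tick[OF assms] mult.assoc)
qed

lemma V_chain_Suc_split:
  assumes "\<omega> \<in> space M"
  shows "ennreal (V (chain n (Suc k) \<omega>))
    = ennreal (V (chain n k \<omega>)) * indicator (no_single_tick n k) \<omega>
      + (\<Sum>p\<in>off_diag. ennreal (V (adopt p (chain n k \<omega>))) * indicator (single_tick n p k) \<omega>)"
proof (cases "\<omega> \<in> (\<Union>p\<in>off_diag. single_tick n p k)")
  case True
  then obtain p0 where p0: "p0 \<in> off_diag" "\<omega> \<in> single_tick n p0 k" by blast
  have "indicator (single_tick n p k) \<omega> = (if p = p0 then 1 else (0::ennreal))" if "p \<in> off_diag" for p
    using single_tick_disjoint[OF p0(1) that, of n k] p0(2)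
    by (cases "p = p0") (auto simp: indicator_def disjoint_iff)
  then have "(\<Sum>p\<in>off_diag. ennreal (V (adopt p (chain n k \<omega>))) * indicator (single_tick n p k) \<omega>)
      = (\<Sum>p\<in>off_diag. if p = p0 then ennreal (V (adopt p0 (chain n k \<omega>))) else 0)"
    by (intro sum.cong refl) simp
  also have "\<dots> = ennreal (V (adopt p0 (chain n k \<omega>)))"
    using p0(1) by (simp add: sum.delta')
  finally show ?thesis
    using True chain_Suc_single_tick[OF p0] by (simp add: no_single_tick_def)
next
  case False
  then show ?thesis
    using assms chain_Suc_no_single_tick[OF False] by (simp add: no_single_tick_def)
qed

lemma V_chain_measurable_past:
  "(\<lambda>\<omega>. ennreal (V (chain n k \<omega>))) \<in> borel_measurable (grid_sigma n (past k))"
  "(\<lambda>\<omega>. ennreal (V (adopt p (chain n k \<omega>)))) \<in> borel_measurable (grid_sigma n (past k))"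
proof -
  have chain: "(\<lambda>\<omega>. chain n k \<omega> i) \<in> borel_measurable (grid_sigma n (past k))" for i
    by (rule chain_measurable_past) simp
  show "(\<lambda>\<omega>. ennreal (V (chain n k \<omega>))) \<in> borel_measurable (grid_sigma n (past k))"
    by (intro measurable_compose[OF V_measurable[OF chain]] measurable_ennreal)
  show "(\<lambda>\<omega>. ennreal (V (adopt p (chain n k \<omega>)))) \<in> borel_measurable (grid_sigma n (past k))"
    by (intro measurable_compose[OF V_measurable[OF adopt_measurable[OF chain]]] measurable_ennreal)
qed

lemma V_chain_measurable [measurable]:
  "(\<lambda>\<omega>. ennreal (V (chain n k \<omega>))) \<in> borel_measurable M"
  "(\<lambda>\<omega>. ennreal (V (adopt p (chain n k \<omega>)))) \<in> borel_measurable M"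
  by (rule measurable_grid_sigma_imp_measurable[OF order_refl V_chain_measurable_past(1)],
      rule measurable_grid_sigma_imp_measurable[OF order_refl V_chain_measurable_past(2)])

lemma expected_V_chain_Suc:
  "(\<integral>\<^sup>+\<omega>. V (chain n (Suc k) \<omega>) \<partial>M)
    = (\<integral>\<^sup>+\<omega>. V (chain n k \<omega>) \<partial>M) * emeasure M (no_single_tick n k)
      + (\<Sum>p\<in>off_diag. (\<integral>\<^sup>+\<omega>. V (adopt p (chain n k \<omega>)) \<partial>M) * emeasure M (single_tick n p k))"
proof -
  have tick_cell: "single_tick n p k \<in> sets (grid_sigma n (cell k))" for p
    by (rule single_tick_in_grid_sigma) (simp add: cell_def)
  have "no_single_tick n k \<in> sets (grid_sigma n (cell k))"
    using tick_cell sets.top[of "grid_sigma n (cell k)"] unfolding no_single_tick_def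
    by (intro sets.Diff sets.finite_UN) auto
  note indep = nn_integral_indep_past_cell[OF V_chain_measurable_past(1) this]
    nn_integral_indep_past_cell[OF V_chain_measurable_past(2) tick_cell]
  have [measurable]: "single_tick n p k \<in> events" "no_single_tick n k \<in> events" for p
    by (simp_all add: single_tick_in_events no_single_tick_in_events)
  have "(\<integral>\<^sup>+\<omega>. V (chain n (Suc k) \<omega>) \<partial>M)
      = (\<integral>\<^sup>+\<omega>. ennreal (V (chain n k \<omega>)) * indicator (no_single_tick n k) \<omega>
           + (\<Sum>p\<in>off_diag. ennreal (V (adopt p (chain n k \<omega>))) * indicator (single_tick n p k) \<omega>) \<partial>M)"
    by (intro nn_integral_cong V_chain_Suc_split)
  also have "\<dots> = (\<integral>\<^sup>+\<omega>. ennreal (V (chain n k \<omega>)) * indicator (no_single_tick n k) \<omega> \<partial>M)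
      + (\<Sum>p\<in>off_diag. \<integral>\<^sup>+\<omega>. ennreal (V (adopt p (chain n k \<omega>))) * indicator (single_tick n p k) \<omega> \<partial>M)"
  proof -
    have "(\<lambda>\<omega>. ennreal (V (chain n k \<omega>)) * indicator (no_single_tick n k) \<omega>) \<in> borel_measurable M"
      "(\<lambda>\<omega>. \<Sum>p\<in>off_diag. ennreal (V (adopt p (chain n k \<omega>))) * indicator (single_tick n p k) \<omega>)
        \<in> borel_measurable M"
      "\<And>p. (\<lambda>\<omega>. ennreal (V (adopt p (chain n k \<omega>))) * indicator (single_tick n p k) \<omega>)
        \<in> borel_measurable M"
      by measurable
    then show ?thesis
      by (simp only: nn_integral_add nn_integral_sum)
  qed
  finally show ?thesis
    by (simp only: indep)
qed

lemma expected_V_chain_Suc_le: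
  assumes "0 < n" and factor: "0 \<le> step_factor \<mu> n"
    and poincare: "\<And>y. 2 * \<mu> * real CARD('n) * V y \<le> dirichlet_form a y"
  shows "(\<integral>\<^sup>+\<omega>. V (chain n (Suc k) \<omega>) \<partial>M) \<le> ennreal (step_factor \<mu> n) * (\<integral>\<^sup>+\<omega>. V (chain n k \<omega>) \<partial>M)"
proof -
  define c where "c = t / n * exp (- (total_rate * (t / n)))"
  define c0 where "c0 = 1 - (\<Sum>p\<in>off_diag. rate p * c)"
  have "0 \<le> c"
    using t_nonneg by (simp add: c_def)
  have prob_no_single: "prob (no_single_tick n k) = c0"
    unfolding prob_no_single_tick[OF \<open>0 < n\<close>] c0_def c_def by (simp only: total_rate_def sum_distrib_right)
  have "(\<integral>\<^sup>+\<omega>. V (chain n (Suc k) \<omega>) \<partial>M) = (\<integral>\<^sup>+\<omega>. V (chain n k \<omega>) \<partial>M) * ennreal c0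
      + (\<Sum>p\<in>off_diag. (\<integral>\<^sup>+\<omega>. V (adopt p (chain n k \<omega>)) \<partial>M) * ennreal (rate p * c))"
    unfolding expected_V_chain_Suc using prob_no_single prob_single_tick[OF \<open>0 < n\<close>]
    by (simp add: emeasure_eq_measure c_def mult.assoc)
  also have "\<dots> = (\<integral>\<^sup>+\<omega>. V (chain n k \<omega>) * c0 + (\<Sum>p\<in>off_diag. V (adopt p (chain n k \<omega>)) * (rate p * c)) \<partial>M)"
    using prob_no_single measure_nonneg[of M "no_single_tick n k"] rate_nonneg \<open>0 \<le> c\<close>
    by (intro nn_integral_mult_add_sum) (auto intro: V_nonneg)
  also have "\<dots> \<le> (\<integral>\<^sup>+\<omega>. step_factor \<mu> n * V (chain n k \<omega>) \<partial>M)"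
    using V_adopt_average_le[OF poincare \<open>0 \<le> c\<close>]
    by (intro nn_integral_mono ennreal_leI) (simp add: c0_def step_factor_def c_def mult.commute)
  also have "\<dots> = (\<integral>\<^sup>+\<omega>. ennreal (step_factor \<mu> n) * ennreal (V (chain n k \<omega>)) \<partial>M)"
    using factor by (simp add: ennreal_mult V_nonneg)
  also have "\<dots> = ennreal (step_factor \<mu> n) * (\<integral>\<^sup>+\<omega>. V (chain n k \<omega>) \<partial>M)"
    by (rule nn_integral_cmult) measurable
  finally show ?thesis .
qed

lemma expected_V_chain_le:
  assumes "0 < n" "0 \<le> step_factor \<mu> n"
    and poincare: "\<And>y. 2 * \<mu> * real CARD('n) * V y \<le> dirichlet_form a y"
  shows "(\<integral>\<^sup>+\<omega>. V (chain n k \<omega>) \<partial>M) \<le> ennreal (step_factor \<mu> n ^ k) * (\<integral>\<^sup>+\<omega>. V (S 0 \<omega>) \<partial>M)"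
proof (induction k)
  case (Suc k)
  have "(\<integral>\<^sup>+\<omega>. V (chain n (Suc k) \<omega>) \<partial>M) \<le> ennreal (step_factor \<mu> n) * (\<integral>\<^sup>+\<omega>. V (chain n k \<omega>) \<partial>M)"
    by (rule expected_V_chain_Suc_le[OF assms])
  also have "\<dots> \<le> ennreal (step_factor \<mu> n) * (ennreal (step_factor \<mu> n ^ k) * (\<integral>\<^sup>+\<omega>. V (S 0 \<omega>) \<partial>M))"
    by (intro mult_left_mono Suc.IH) simp
  also have "\<dots> = ennreal (step_factor \<mu> n ^ Suc k) * (\<integral>\<^sup>+\<omega>. V (S 0 \<omega>) \<partial>M)"
    using assms(2) by (simp add: ennreal_mult mult.assoc)
  finally show ?case .
qed simp

lemma step_factor_bounds:
  assumes "0 \<le> \<mu>" "0 < n" and n_large: "2 * total_rate * t \<le> real n" "2 * \<mu> * t / real CARD('n) \<le> real n"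
  shows "0 \<le> step_factor \<mu> n" "step_factor \<mu> n ^ n \<le> exp (- \<mu> * t / real CARD('n))"
proof -
  define N where "N = real CARD('n)"
  define e where "e = exp (- (total_rate * (t / n)))"
  define c where "c = t / n * e * 2 * \<mu> / N"
  have "0 < N" by (simp add: N_def)
  have "e \<le> 1"
    using total_rate_nonneg t_nonneg by (simp add: e_def)
  have "1 / 2 \<le> e"
  proof -
    have "total_rate * (t / n) \<le> 1 / 2"
      using n_large(1) \<open>0 < n\<close> by (simp add: field_simps)
    moreover have "1 - total_rate * (t / n) \<le> e"
      using exp_ge_add_one_self[of "- (total_rate * (t / n))"] by (simp add: e_def)
    ultimately show ?thesis by simp
  qed
  have "0 \<le> c"
    using t_nonneg assms(1) \<open>0 < N\<close> \<open>1 / 2 \<le> e\<close> by (simp add: c_def)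
  have "c = (t / n * 2 * \<mu> / N) * e"
    by (simp add: c_def algebra_simps)
  also have "\<dots> \<le> t / n * 2 * \<mu> / N"
    using \<open>e \<le> 1\<close> t_nonneg assms(1) \<open>0 < N\<close> by (intro mult_left_le) auto
  also have "\<dots> \<le> 1"
    using n_large(2) \<open>0 < n\<close> \<open>0 < N\<close> by (simp add: N_def field_simps)
  finally have "c \<le> 1" .
  have factor: "step_factor \<mu> n = 1 - c"
    by (simp add: step_factor_def c_def e_def N_def)
  show "0 \<le> step_factor \<mu> n"
    using \<open>c \<le> 1\<close> by (simp add: factor)
  have "(1 - c) ^ n \<le> exp (- (c * n))"
    using \<open>c \<le> 1\<close> by (rule power_one_minus_le_exp)
  also have "\<dots> \<le> exp (- \<mu> * t / N)"
  proof -
    have "c * n = t * e * 2 * \<mu> / N"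
      using \<open>0 < n\<close> by (simp add: c_def field_simps)
    moreover have "t \<le> 2 * e * t"
      using mult_right_mono[of 1 "2 * e" t] \<open>1 / 2 \<le> e\<close> t_nonneg by simp
    then have "\<mu> * t / N \<le> \<mu> * (2 * e * t) / N"
      using assms(1) \<open>0 < N\<close> by (intro divide_right_mono mult_left_mono) auto
    ultimately show ?thesis
      by (simp add: algebra_simps)
  qed
  finally show "step_factor \<mu> n ^ n \<le> exp (- \<mu> * t / real CARD('n))"
    by (simp add: factor N_def)
qed

lemma V_S_measurable [measurable]: "0 \<le> u \<Longrightarrow> (\<lambda>\<omega>. V (S u \<omega>)) \<in> borel_measurable M"
proof (rule V_measurable)
  fix i assume "0 \<le> u"
  then have "S u \<in> measurable M (Pi\<^sub>M (UNIV::'n set) (\<lambda>_. borel :: real measure))"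
    using solution unfolding consensus_solution_def by blast
  then show "(\<lambda>\<omega>. S u \<omega> i) \<in> borel_measurable M"
    by (rule measurable_compose[OF _ measurable_component_singleton]) simp
qed

lemma expected_V_on_ticks_separated_le:
  assumes "0 \<le> \<mu>" and poincare: "\<And>y. 2 * \<mu> * real CARD('n) * V y \<le> dirichlet_form a y"
    and "0 < n" and n_large: "2 * total_rate * t \<le> real n" "2 * \<mu> * t / real CARD('n) \<le> real n"
  shows "(\<integral>\<^sup>+\<omega>. ennreal (V (S t \<omega>)) * indicator (ticks_separated n) \<omega> \<partial>M)
    \<le> ennreal (exp (- \<mu> * t / real CARD('n))) * (\<integral>\<^sup>+\<omega>. V (S 0 \<omega>) \<partial>M)"
proof -
  note factor = step_factor_bounds[OF assms(1,3) n_large]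
  have "AE \<omega> in M. ennreal (V (S t \<omega>)) * indicator (ticks_separated n) \<omega>
      = ennreal (V (chain n n \<omega>)) * indicator (ticks_separated n) \<omega>"
    using AE_consensus_path
    by eventually_elim (auto simp: S_eq_chain[OF \<open>0 < n\<close>] indicator_def)
  then have "(\<integral>\<^sup>+\<omega>. ennreal (V (S t \<omega>)) * indicator (ticks_separated n) \<omega> \<partial>M)
      = (\<integral>\<^sup>+\<omega>. ennreal (V (chain n n \<omega>)) * indicator (ticks_separated n) \<omega> \<partial>M)"
    by (rule nn_integral_cong_AE)
  also have "\<dots> \<le> (\<integral>\<^sup>+\<omega>. V (chain n n \<omega>) \<partial>M)"
    by (intro nn_integral_mono) (simp add: indicator_def)
  also have "\<dots> \<le> ennreal (step_factor \<mu> n ^ n) * (\<integral>\<^sup>+\<omega>. V (S 0 \<omega>) \<partial>M)"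
    by (rule expected_V_chain_le[OF \<open>0 < n\<close> factor(1) poincare])
  also have "\<dots> \<le> ennreal (exp (- \<mu> * t / real CARD('n))) * (\<integral>\<^sup>+\<omega>. V (S 0 \<omega>) \<partial>M)"
    by (intro mult_right_mono ennreal_leI factor(2)) simp
  finally show ?thesis .
qed

lemma AE_ticks_separated: "AE \<omega> in M. \<exists>m. \<omega> \<in> ticks_separated (2 ^ m)"
proof -
  define U where "U = (\<Union>m. ticks_separated (2 ^ m))"
  have "space M - U \<in> events"
    unfolding U_def using ticks_separated_in_events by auto
  have "prob (space M - U) \<le> (total_rate * t)\<^sup>2 / 2 ^ m" for m
  proof -
    have "prob (space M - U) \<le> prob (space M - ticks_separated (2 ^ m))"
      using ticks_separated_in_events by (intro finite_measure_mono) (auto simp: U_def)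
    also have "\<dots> \<le> real (2 ^ m) * (total_rate * (t / real (2 ^ m)))\<^sup>2"
      by (rule prob_not_ticks_separated) simp
    also have "\<dots> = (total_rate * t)\<^sup>2 / 2 ^ m"
      by (simp add: power2_eq_square field_simps)
    finally show ?thesis .
  qed
  then have "prob (space M - U) \<le> 0"
    by (intro LIMSEQ_le_const[OF LIMSEQ_divide_realpow_zero[of 2 "(total_rate * t)\<^sup>2"]]) auto
  then have "space M - U \<in> null_sets M"
    using \<open>space M - U \<in> events\<close> by (simp add: emeasure_eq_measure null_sets_def measure_le_0_iff)
  then show ?thesis
    by (rule AE_I') (auto simp: U_def)
qed

lemma incseq_ticks_separated: "incseq (\<lambda>m. ticks_separated (2 ^ m))"
proof (rule incseq_SucI)
  show "ticks_separated (2 ^ m) \<subseteq> ticks_separated (2 ^ Suc m)" for m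
    using ticks_separated_double[of "2 ^ m"] by simp
qed

lemma AE_V_eq_SUP_ticks_separated:
  "AE \<omega> in M. ennreal (V (S t \<omega>)) = (SUP m. ennreal (V (S t \<omega>)) * indicator (ticks_separated (2 ^ m)) \<omega>)"
  using AE_ticks_separated
proof eventually_elim
  case (elim \<omega>)
  then obtain m where "\<omega> \<in> ticks_separated (2 ^ m)" by blast
  then have "ennreal (V (S t \<omega>)) \<le> (SUP m. ennreal (V (S t \<omega>)) * indicator (ticks_separated (2 ^ m)) \<omega>)"
    by (metis (no_types, lifting) SUP_upper UNIV_I indicator_simps(1) mult.right_neutral)
  moreover have "(SUP m. ennreal (V (S t \<omega>)) * indicator (ticks_separated (2 ^ m)) \<omega>) \<le> ennreal (V (S t \<omega>))"
    by (rule SUP_least) (simp add: indicator_def)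
  ultimately show ?case
    by (rule antisym)
qed

lemma expected_V_decay:
  assumes "0 \<le> \<mu>" and poincare: "\<And>y. 2 * \<mu> * real CARD('n) * V y \<le> dirichlet_form a y"
  shows "(\<integral>\<^sup>+\<omega>. V (S t \<omega>) \<partial>M) \<le> ennreal (exp (- \<mu> * t / real CARD('n))) * (\<integral>\<^sup>+\<omega>. V (S 0 \<omega>) \<partial>M)"
proof -
  define B where "B = ennreal (exp (- \<mu> * t / real CARD('n))) * (\<integral>\<^sup>+\<omega>. V (S 0 \<omega>) \<partial>M)"
  define f where "f m \<omega> = ennreal (V (S t \<omega>)) * indicator (ticks_separated (2 ^ m)) \<omega>" for m \<omega>
  have "incseq f"
    using incseq_ticks_separated by (auto simp: incseq_def f_def le_fun_def indicator_def)
  have f_measurable: "f m \<in> borel_measurable M" for m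
    using t_nonneg ticks_separated_in_events unfolding f_def by measurable
  obtain m0 :: nat where m0: "2 * total_rate * t < 2 ^ m0" "2 * \<mu> * t / real CARD('n) < 2 ^ m0"
    using real_arch_pow[of 2 "max (2 * total_rate * t) (2 * \<mu> * t / real CARD('n))"] by auto
  have "integral\<^sup>N M (f m) \<le> B" for m
  proof -
    have "(2::real) ^ m0 \<le> 2 ^ max m m0"
      by (rule power_increasing) simp_all
    with m0 have "2 * total_rate * t \<le> 2 ^ max m m0" "2 * \<mu> * t / real CARD('n) \<le> 2 ^ max m m0"
      by linarith+
    then have "integral\<^sup>N M (f (max m m0)) \<le> B"
      unfolding f_def B_def by (intro expected_V_on_ticks_separated_le[OF assms]) auto
    moreover have "integral\<^sup>N M (f m) \<le> integral\<^sup>N M (f (max m m0))"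
      using \<open>incseq f\<close> by (intro nn_integral_mono) (simp add: incseq_def le_fun_def)
    ultimately show ?thesis by simp
  qed
  moreover have "(\<integral>\<^sup>+\<omega>. V (S t \<omega>) \<partial>M) = (SUP m. integral\<^sup>N M (f m))"
    unfolding nn_integral_monotone_convergence_SUP[OF \<open>incseq f\<close> f_measurable, symmetric] f_def
    by (rule nn_integral_cong_AE[OF AE_V_eq_SUP_ticks_separated])
  ultimately show ?thesis
    by (simp add: B_def SUP_least)
qed

end

theorem mainTheorem13:
  fixes a :: "'n::finite \<Rightarrow> 'n \<Rightarrow> real"
    and M :: "'a measure"
    and Np :: "'n \<times> 'n \<Rightarrow> real \<Rightarrow> 'a \<Rightarrow> nat"
    and S :: "real \<Rightarrow> 'a \<Rightarrow> 'n \<Rightarrow> real"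
    and t :: real
  assumes "prob_space M"
    and "\<And>i j. i \<noteq> j \<Longrightarrow> 0 \<le> a i j"
    and "\<And>i j. i \<noteq> j \<Longrightarrow> a i j = a j i"
    and "transpose (laplacian a) = laplacian a"
    and "weights_connected a"
    and "poisson_clocks M a Np S"
    and "consensus_solution M Np S"
    and "0 \<le> t"
  shows "(\<integral>\<^sup>+ \<omega>. ennreal (V (S t \<omega>)) \<partial>M)
           \<le> ennreal (exp (- kth_eigenvalue (laplacian a) 2 * t / real CARD('n)))
               * (\<integral>\<^sup>+ \<omega>. ennreal (V (S 0 \<omega>)) \<partial>M)"
proof (cases "2 \<le> CARD('n)")
  case False
  then show ?thesis
    by (simp add: V_eq_0_if_card_le_1)
next
  case True
  obtain \<mu> where "0 < \<mu>" "kth_eigenvalue (laplacian a) 2 \<le> \<mu>"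
    and poincare: "\<And>y. 2 * \<mu> * real CARD('n) * V y \<le> dirichlet_form a y"
    using laplacian_spectral_gap[OF assms(2,3,5) True] by blast
  interpret consensus_model M a Np S t
    using assms unfolding consensus_model_def consensus_model_axioms_def by blast
  have "(\<integral>\<^sup>+ \<omega>. V (S t \<omega>) \<partial>M) \<le> ennreal (exp (- \<mu> * t / real CARD('n))) * (\<integral>\<^sup>+ \<omega>. V (S 0 \<omega>) \<partial>M)"
    using \<open>0 < \<mu>\<close> poincare by (intro expected_V_decay) simp_all
  also have "\<dots> \<le> ennreal (exp (- kth_eigenvalue (laplacian a) 2 * t / real CARD('n)))
      * (\<integral>\<^sup>+ \<omega>. V (S 0 \<omega>) \<partial>M)"
    using \<open>kth_eigenvalue (laplacian a) 2 \<le> \<mu>\<close> \<open>0 \<le> t\<close>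
    by (intro mult_right_mono ennreal_leI) (auto intro: divide_right_mono mult_right_mono)
  finally show ?thesis .
qed

end
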